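(* Let $\lambda$ be a partition and set $R:=R_\lambda$. (i) The following three sets of tableaux of shape $\lambda$ coincide: the set of $\lambda$-keys $Y_\lambda(\pi)$ of the $R$-312-avoiding $R$-permutations $\pi$; the set of gapless $\lambda$-keys; and the set of $\lambda$-row end max tableaux $M_\lambda(\gamma)$ of the gapless $R$-tuples $\gamma$. (ii) An $R$-permutation $\pi$ is $R$-312-avoiding if and only if its $\lambda$-key $Y_\lambda(\pi)$ is gapless. (iii) If an $R$-permutation $\pi$ is $R$-312-avoiding, then $M_\lambda(\Psi_R(\pi))=Y_\lambda(\pi)$. Moreover, the map sending an $R$-chain $B$ to the $\lambda$-key whose column $j$ consists of the elements of $B_h$ (where $\zeta_j=q_h$; columns of length $n$ consist of $[n]$) restricts to a bijection from the set of $R$-rightmost clump deleting $R$-chains onto the set of gapless $\lambda$-keys, and $\gamma\mapsto M_\lambda(\gamma)$ is a bijection from the set of gapless $R$-tuples onto the set of $\lambda$-row end max tableaux of gapless $R$-tuples.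
   Context: Fix $n\ge1$; $[m]=\{1,\dots,m\}$. For a finite $Q\subseteq\mathbb{Z}$, $\mathrm{rank}^d(Q)$ is its $d$-th largest element. For $R\subseteq[n-1]$ with elements $q_1<\dots<q_r$, set $q_0:=0$, $q_{r+1}:=n$, $p_h:=q_h-q_{h-1}$; the $h$-th carrel is $(q_{h-1},q_h]=\{q_{h-1}+1,\dots,q_h\}$. An $R$-tuple is an $n$-tuple with entries in $[n]$; it is upper if $\nu_i\ge i$ for all $i$ and $R$-increasing if strictly increasing on each carrel. An $R$-permutation is an $R$-increasing permutation of $[n]$ (one-line notation). It is $R$-312-containing if there exist $h\in[r-1]$ and $1\le a\le q_h<b\le q_{h+1}<c\le n$ with $\pi_b<\pi_c<\pi_a$, and $R$-312-avoiding otherwise. An $R$-chain is $\emptyset=B_0\subset B_1\subset\cdots\subset B_{r+1}=[n]$ with $|B_h|=q_h$; the $R$-chain of $\pi$ is $B_h=\{\pi_1,\dots,\pi_{q_h}\}$. A clump of a finite set of integers is a maximal subset of consecutive integers; clumps are indexed $L_1,\dots,L_f$ increasingly. An $R$-chain is $R$-rightmost clump deleting if for each $h\in[r]$, writing $B_{h+1}=L_1\cup\cdots\cup L_f$ as clumps, there is $e\in[f]$ with $L_e\cup\cdots\cup L_f\supseteq B_{h+1}\setminus B_h\supseteq L_{e+1}\cup\cdots\cup L_f$. A gapless $R$-tuple is an upper $R$-increasing $R$-tuple $\gamma$ such that whenever $h\in[r]$ has $\gamma_{q_h}>\gamma_{q_h+1}$, setting $s:=\gamma_{q_h}-\gamma_{q_h+1}+1$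 one has $s\le p_{h+1}$ and $\gamma_{q_h+t}=\gamma_{q_h}-s+t$ for $t\in[s]$. The rank $R$-tuple $\Psi_R(\pi)=\psi$ is defined by $\psi_i:=\mathrm{rank}^{q_h-i+1}(B_h)$ for $i\in(q_{h-1},q_h]$, $B$ the $R$-chain of $\pi$. A partition is $\lambda=(\lambda_1\ge\cdots\ge\lambda_n\ge0)\in\mathbb{Z}^n$; boxes $(j,i)$ (column $j$, row $i$), $1\le j\le\lambda_1$, $1\le i\le\zeta_j:=\#\{i:\lambda_i\ge j\}$. $R_\lambda:=\{\zeta_j:\zeta_j<n\}$; below $R=R_\lambda$ with the notation $q_h,r,p_h$. A tableau of shape $\lambda$ is a filling with values in $[n]$ strictly increasing down columns and weakly increasing along rows; $\mathcal{T}_\lambda$ is their set, ordered entrywise. $T_j(i)$ is the entry at column $j$, row $i$; $B(T_j)$ is the set of entries of column $j$; a latent column $0$ with $T_0(i)=i$ is used when needed. A $\lambda$-key is $Y\in\mathcal{T}_\lambda$ with $B(Y_l)\supseteq B(Y_j)$ for $l\le j$. The $\lambda$-key $Y_\lambda(\pi)$ of an $R_\lambda$-permutation $\pi$ is the tableau whose column $j$ consists of the elements of $\{\pi_1,\dots,\pi_{\zeta_j}\}$ in increasing order. A $\lambda$-key $Y$ is gapless if for every $h\in[r-1]$ the following holds: let $b$ be the smallest value in the columns of length $q_{h+1}$ that does not appear in the columns of length $q_h$, and $m$ the largest value in the columns of length $q_h$; if $b\le m$ then every column of length $q_{h+1}$ contains all of $b,b+1,\dots,m$ (in consecutive rows).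 The $\lambda$-row end list of $T$ is $\omega_i:=T_{\lambda_i}(i)$; for an upper $R_\lambda$-increasing tuple $\alpha$, $M_\lambda(\alpha)$ is the maximum element (under entrywise order) of the nonempty, join-closed set of $T\in\mathcal{T}_\lambda$ with $\lambda$-row end list $\alpha$. *)

theory Defs
  imports Main
begin

(* Conventions: n-tuples and permutations are functions nat => nat, meaningful on {1..n},
   and 0 outside {1..n}.  A partition is lam :: nat => nat, meaningful on {1..n}.
   Tableaux are functions T :: nat => nat => nat, T j i = entry in column j, row i,
   and 0 outside the shape.  R-chains are functions nat => nat set indexed by 0..r+1,
   empty for larger indices. *)

definition q :: "nat set \<Rightarrow> nat \<Rightarrow> nat \<Rightarrow> nat" where
  "q R n h = (0 # sorted_list_of_set R @ [n]) ! h"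

definition R_tuple :: "nat \<Rightarrow> (nat \<Rightarrow> nat) \<Rightarrow> bool" where
  "R_tuple n \<nu> \<longleftrightarrow> (\<forall>i\<in>{1..n}. \<nu> i \<in> {1..n}) \<and> (\<forall>i. i \<notin> {1..n} \<longrightarrow> \<nu> i = 0)"

definition upper :: "nat \<Rightarrow> (nat \<Rightarrow> nat) \<Rightarrow> bool" where
  "upper n \<nu> \<longleftrightarrow> (\<forall>i\<in>{1..n}. i \<le> \<nu> i)"

definition R_increasing :: "nat set \<Rightarrow> nat \<Rightarrow> (nat \<Rightarrow> nat) \<Rightarrow> bool" where
  "R_increasing R n \<nu> \<longleftrightarrow>
     (\<forall>h\<in>{1..card R + 1}. \<forall>i j. q R n (h - 1) < i \<and> i < j \<and> j \<le> q R n h \<longrightarrow> \<nu> i < \<nu> j)"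

definition R_perm :: "nat set \<Rightarrow> nat \<Rightarrow> (nat \<Rightarrow> nat) \<Rightarrow> bool" where
  "R_perm R n \<pi> \<longleftrightarrow> R_tuple n \<pi> \<and> bij_betw \<pi> {1..n} {1..n} \<and> R_increasing R n \<pi>"

definition R312_containing :: "nat set \<Rightarrow> nat \<Rightarrow> (nat \<Rightarrow> nat) \<Rightarrow> bool" where
  "R312_containing R n \<pi> \<longleftrightarrow>
     (\<exists>h\<in>{1..card R - 1}. \<exists>a b c. 1 \<le> a \<and> a \<le> q R n h \<and> q R n h < b \<and> b \<le> q R n (h + 1)
        \<and> q R n (h + 1) < c \<and> c \<le> n \<and> \<pi> b < \<pi> c \<and> \<pi> c < \<pi> a)"

definition R_chain :: "nat set \<Rightarrow> nat \<Rightarrow> (nat \<Rightarrow> nat set) \<Rightarrow> bool" where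
  "R_chain R n B \<longleftrightarrow> B 0 = {} \<and> B (card R + 1) = {1..n}
     \<and> (\<forall>h\<le>card R. B h \<subset> B (Suc h))
     \<and> (\<forall>h\<le>card R + 1. card (B h) = q R n h)
     \<and> (\<forall>h. card R + 1 < h \<longrightarrow> B h = {})"

definition chain_of :: "nat set \<Rightarrow> nat \<Rightarrow> (nat \<Rightarrow> nat) \<Rightarrow> nat \<Rightarrow> nat set" where
  "chain_of R n \<pi> h = (if h \<le> card R + 1 then \<pi> ` {1..q R n h} else {})"

definition is_clump :: "nat set \<Rightarrow> nat set \<Rightarrow> bool" where
  "is_clump S L \<longleftrightarrow> (\<exists>a b. a \<le> b \<and> L = {a..b} \<and> L \<subseteq> S \<and> (0 < a \<longrightarrow> a - 1 \<notin> S) \<and> Suc b \<notin> S)"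

(* L_e \<union> ... \<union> L_f is the union of the clumps whose minimum is \<ge> min L_e *)
definition rightmost_clump_deleting :: "nat set \<Rightarrow> nat \<Rightarrow> (nat \<Rightarrow> nat set) \<Rightarrow> bool" where
  "rightmost_clump_deleting R n B \<longleftrightarrow>
     (\<forall>h\<in>{1..card R}. \<exists>L. is_clump (B (Suc h)) L
        \<and> \<Union>{L'. is_clump (B (Suc h)) L' \<and> Min L < Min L'} \<subseteq> B (Suc h) - B h
        \<and> B (Suc h) - B h \<subseteq> \<Union>{L'. is_clump (B (Suc h)) L' \<and> Min L \<le> Min L'})"

definition gapless_tuple :: "nat set \<Rightarrow> nat \<Rightarrow> (nat \<Rightarrow> nat) \<Rightarrow> bool" where
  "gapless_tuple R n \<gamma> \<longleftrightarrow> R_tuple n \<gamma> \<and> upper n \<gamma> \<and> R_increasing R n \<gamma> \<and>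
     (\<forall>h\<in>{1..card R}. \<gamma> (q R n h) > \<gamma> (q R n h + 1) \<longrightarrow>
        (let s = \<gamma> (q R n h) - \<gamma> (q R n h + 1) + 1 in
           s \<le> q R n (h + 1) - q R n h \<and>
           (\<forall>t\<in>{1..s}. \<gamma> (q R n h + t) = \<gamma> (q R n h) - s + t)))"

definition rank :: "nat \<Rightarrow> nat set \<Rightarrow> nat" where
  "rank d Q = sorted_list_of_set Q ! (card Q - d)"

definition Psi :: "nat set \<Rightarrow> nat \<Rightarrow> (nat \<Rightarrow> nat) \<Rightarrow> nat \<Rightarrow> nat" where
  "Psi R n \<pi> i = (if i \<in> {1..n} then
      (let h = (THE h. h \<in> {1..card R + 1} \<and> q R n (h - 1) < i \<and> i \<le> q R n h)
       in rank (q R n h - i + 1) (chain_of R n \<pi> h))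
     else 0)"

definition is_partition :: "nat \<Rightarrow> (nat \<Rightarrow> nat) \<Rightarrow> bool" where
  "is_partition n lam \<longleftrightarrow> (\<forall>i j. 1 \<le> i \<longrightarrow> i \<le> j \<longrightarrow> j \<le> n \<longrightarrow> lam j \<le> lam i)"

definition zeta :: "nat \<Rightarrow> (nat \<Rightarrow> nat) \<Rightarrow> nat \<Rightarrow> nat" where
  "zeta n lam j = card {i\<in>{1..n}. j \<le> lam i}"

definition R_of :: "nat \<Rightarrow> (nat \<Rightarrow> nat) \<Rightarrow> nat set" where
  "R_of n lam = {zeta n lam j | j. 1 \<le> j \<and> j \<le> lam 1 \<and> zeta n lam j < n}"

definition in_shape :: "nat \<Rightarrow> (nat \<Rightarrow> nat) \<Rightarrow> nat \<Rightarrow> nat \<Rightarrow> bool" where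
  "in_shape n lam j i \<longleftrightarrow> 1 \<le> i \<and> i \<le> n \<and> 1 \<le> j \<and> j \<le> lam i"

definition tableau :: "nat \<Rightarrow> (nat \<Rightarrow> nat) \<Rightarrow> (nat \<Rightarrow> nat \<Rightarrow> nat) \<Rightarrow> bool" where
  "tableau n lam T \<longleftrightarrow>
     (\<forall>j i. in_shape n lam j i \<longrightarrow> T j i \<in> {1..n})
     \<and> (\<forall>j i. \<not> in_shape n lam j i \<longrightarrow> T j i = 0)
     \<and> (\<forall>j i. in_shape n lam j i \<and> in_shape n lam j (Suc i) \<longrightarrow> T j i < T j (Suc i))
     \<and> (\<forall>j i. in_shape n lam j i \<and> in_shape n lam (Suc j) i \<longrightarrow> T j i \<le> T (Suc j) i)"

definition colset :: "nat \<Rightarrow> (nat \<Rightarrow> nat) \<Rightarrow> (nat \<Rightarrow> nat \<Rightarrow> nat) \<Rightarrow> nat \<Rightarrow> nat set" where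
  "colset n lam T j = {T j i | i. 1 \<le> i \<and> i \<le> zeta n lam j}"

definition is_key :: "nat \<Rightarrow> (nat \<Rightarrow> nat) \<Rightarrow> (nat \<Rightarrow> nat \<Rightarrow> nat) \<Rightarrow> bool" where
  "is_key n lam Y \<longleftrightarrow> tableau n lam Y \<and>
     (\<forall>l j. 1 \<le> l \<longrightarrow> l \<le> j \<longrightarrow> j \<le> lam 1 \<longrightarrow> colset n lam Y j \<subseteq> colset n lam Y l)"

definition key_of_perm :: "nat \<Rightarrow> (nat \<Rightarrow> nat) \<Rightarrow> (nat \<Rightarrow> nat) \<Rightarrow> nat \<Rightarrow> nat \<Rightarrow> nat" where
  "key_of_perm n lam \<pi> j i =
     (if in_shape n lam j i then sorted_list_of_set (\<pi> ` {1..zeta n lam j}) ! (i - 1) else 0)"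

definition cols_of_length :: "nat \<Rightarrow> (nat \<Rightarrow> nat) \<Rightarrow> (nat \<Rightarrow> nat \<Rightarrow> nat) \<Rightarrow> nat \<Rightarrow> nat set" where
  "cols_of_length n lam Y L = \<Union>{colset n lam Y j | j. 1 \<le> j \<and> j \<le> lam 1 \<and> zeta n lam j = L}"

definition gapless_key :: "nat \<Rightarrow> (nat \<Rightarrow> nat) \<Rightarrow> (nat \<Rightarrow> nat \<Rightarrow> nat) \<Rightarrow> bool" where
  "gapless_key n lam Y \<longleftrightarrow> is_key n lam Y \<and>
     (\<forall>h\<in>{1..card (R_of n lam) - 1}.
        let Ch = cols_of_length n lam Y (q (R_of n lam) n h);
            Ch1 = cols_of_length n lam Y (q (R_of n lam) n (h + 1));
            b = Min (Ch1 - Ch); m = Max Ch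
        in b \<le> m \<longrightarrow>
           (\<forall>j. 1 \<le> j \<and> j \<le> lam 1 \<and> zeta n lam j = q (R_of n lam) n (h + 1)
                \<longrightarrow> {b..m} \<subseteq> colset n lam Y j))"

(* lambda-row end list, with the latent column 0: T_0(i) = i *)
definition row_end :: "nat \<Rightarrow> (nat \<Rightarrow> nat) \<Rightarrow> (nat \<Rightarrow> nat \<Rightarrow> nat) \<Rightarrow> nat \<Rightarrow> nat" where
  "row_end n lam T i = (if i \<in> {1..n} then (if lam i = 0 then i else T (lam i) i) else 0)"

definition M_max :: "nat \<Rightarrow> (nat \<Rightarrow> nat) \<Rightarrow> (nat \<Rightarrow> nat) \<Rightarrow> (nat \<Rightarrow> nat \<Rightarrow> nat)" where
  "M_max n lam \<alpha> = (GREATEST T. tableau n lam T \<and> row_end n lam T = \<alpha>)"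

definition key_of_chain :: "nat \<Rightarrow> (nat \<Rightarrow> nat) \<Rightarrow> (nat \<Rightarrow> nat set) \<Rightarrow> nat \<Rightarrow> nat \<Rightarrow> nat" where
  "key_of_chain n lam B j i =
     (if in_shape n lam j i then
        sorted_list_of_set (B (THE h. h \<le> card (R_of n lam) + 1 \<and> q (R_of n lam) n h = zeta n lam j)) ! (i - 1)
      else 0)"

end

theory Submission
  imports Defs
begin

(* A lambda-key is determined by its columns, which are the members of an R-chain (column j is
   B_h where q_h = zeta_j), and the lambda-key of an R-permutation pi is the key of its R-chain
   B_h = {pi_1, ..., pi_(q_h)}.  R-312-avoidance of pi, gaplessness of its key and the rightmost
   clump deleting property of its chain all express one condition on consecutive members
   A = B_h and S = B_(h+1): no value outside S lies strictly between an element of S - A and an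
   element of A.

   For a chain satisfying it, the rank tuple psi (on the h-th carrel, the largest elements of B_h
   in increasing order) is gapless, and the key is the largest tableau with row end list psi:
   every key entry off the row end is at least its right neighbour or is followed in its column
   by its successor, so a competing tableau is bounded entry by entry, starting from the row
   ends.  Conversely, a gapless tuple gamma is the rank tuple of the 312-free chain whose h-th
   member consists of the terms of the largest strictly increasing sequence below gamma on
   {1..q_h}.  The bijections follow because a key determines its chain and M_lambda(gamma)
   recovers gamma as its row end list. *)

section \<open>Sorted enumerations of finite sets\<close>

lemma sorted_list_of_set_nth_mem:
  "finite S \<Longrightarrow> k < card S \<Longrightarrow> sorted_list_of_set S ! k \<in> S"
  by (metis nth_mem set_sorted_list_of_set length_sorted_list_of_set)

lemma sorted_list_of_set_nth_less:
  "finite S \<Longrightarrow> k < k' \<Longrightarrow> k' < card S \<Longrightarrow> sorted_list_of_set S ! k < sorted_list_of_set S ! k'"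
  using sorted_wrt_nth_less[OF strict_sorted_list_of_set] by simp

lemma sorted_list_of_set_nth_le:
  "finite S \<Longrightarrow> k \<le> k' \<Longrightarrow> k' < card S \<Longrightarrow> sorted_list_of_set S ! k \<le> sorted_list_of_set S ! k'"
  using sorted_list_of_set_nth_less[of S k k'] by (cases "k = k'") auto

lemma obtain_sorted_list_of_set_index:
  assumes "finite S" "x \<in> S"
  obtains k where "k < card S" "sorted_list_of_set S ! k = x"
  using assms by (metis in_set_conv_nth set_sorted_list_of_set length_sorted_list_of_set)

lemma card_less_sorted_list_of_set_nth:
  fixes S :: "'a::linorder set"
  assumes "finite S" "k < card S"
  shows "card {y\<in>S. y < sorted_list_of_set S ! k} = k"
proof -
  let ?xs = "sorted_list_of_set S"
  have "{y\<in>S. y < ?xs ! k} = (\<lambda>i. ?xs ! i) ` {..<k}"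
  proof (intro set_eqI iffI)
    fix y assume y: "y \<in> {y\<in>S. y < ?xs ! k}"
    then obtain i where i: "i < card S" "?xs ! i = y"
      using obtain_sorted_list_of_set_index[OF assms(1)] by blast
    then have "i < k"
      using y sorted_list_of_set_nth_le[OF assms(1), of k i] assms by (auto simp: not_less[symmetric])
    then show "y \<in> (\<lambda>i. ?xs ! i) ` {..<k}" using i by auto
  qed (use assms sorted_list_of_set_nth_less sorted_list_of_set_nth_mem in fastforce)
  moreover have "inj_on (\<lambda>i. ?xs ! i) {..<k}"
    using assms by (intro inj_onI) (simp add: nth_eq_iff_index_eq)
  ultimately show ?thesis by (simp add: card_image)
qed

lemma sorted_list_of_set_nth_eqI:
  fixes S :: "'a::linorder set"
  assumes "finite S" "x \<in> S" "card {y\<in>S. y < x} = k"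
  shows "sorted_list_of_set S ! k = x"
proof -
  obtain i where "i < card S" "sorted_list_of_set S ! i = x"
    using obtain_sorted_list_of_set_index[OF assms(1,2)] .
  then show ?thesis using card_less_sorted_list_of_set_nth[OF assms(1)] assms(3) by metis
qed

lemma sorted_list_of_set_nth_last:
  fixes S :: "'a::linorder set"
  assumes "finite S" "S \<noteq> {}"
  shows "sorted_list_of_set S ! (card S - 1) = Max S"
proof (rule sorted_list_of_set_nth_eqI[OF assms(1)])
  show "Max S \<in> S" using assms by simp
  have "{y\<in>S. y < Max S} = S - {Max S}" using assms by (auto simp: less_le)
  then show "card {y\<in>S. y < Max S} = card S - 1" using assms by simp
qed

lemma card_atMost_sorted_list_of_set_nth:
  fixes S :: "'a::linorder set"
  assumes "finite S" "k < card S"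
  shows "card {y\<in>S. y \<le> sorted_list_of_set S ! k} = Suc k"
proof -
  have "{y\<in>S. y \<le> sorted_list_of_set S ! k} = insert (sorted_list_of_set S ! k) {y\<in>S. y < sorted_list_of_set S ! k}"
    using sorted_list_of_set_nth_mem[OF assms] by auto
  then show ?thesis using card_less_sorted_list_of_set_nth[OF assms] assms(1) by simp
qed

lemma card_atMost_below_sorted_list_of_set_nth:
  fixes S :: "'a::linorder set"
  assumes "finite S" "k < card S" "x < sorted_list_of_set S ! k"
  shows "card {y\<in>S. y \<le> x} \<le> k"
proof -
  have "{y\<in>S. y \<le> x} \<subseteq> {y\<in>S. y < sorted_list_of_set S ! k}" using assms(3) by auto
  then show ?thesis
    using card_mono[of "{y\<in>S. y < sorted_list_of_set S ! k}"] card_less_sorted_list_of_set_nth[OF assms(1,2)]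
      assms(1) by simp
qed

lemma sorted_list_of_set_nth_gap:
  fixes S :: "'a::linorder set"
  assumes "finite S" "Suc k < card S"
    and "sorted_list_of_set S ! k < x" "x < sorted_list_of_set S ! Suc k"
  shows "x \<notin> S"
proof
  assume "x \<in> S"
  then obtain i where i: "i < card S" "sorted_list_of_set S ! i = x"
    using obtain_sorted_list_of_set_index[OF assms(1)] by blast
  then have "k < i" "i < Suc k"
    using sorted_list_of_set_nth_le[OF assms(1), of i k] sorted_list_of_set_nth_le[OF assms(1), of "Suc k" i]
      assms by (auto simp: not_less[symmetric])
  then show False by simp
qed

lemma obtain_new_element_below:
  assumes "finite A" "card {y\<in>A. y \<le> x} < card {y\<in>S. y \<le> x}"
  obtains u where "u \<in> S - A" "u \<le> x"
proof -
  have "\<not> {y\<in>S. y \<le> x} \<subseteq> {y\<in>A. y \<le> x}"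
    using card_mono[of "{y\<in>A. y \<le> x}" "{y\<in>S. y \<le> x}"] assms by auto
  then show ?thesis using that by blast
qed

lemma sorted_list_of_set_nth_interval:
  fixes S :: "nat set"
  assumes "finite S" "k < card S" "{sorted_list_of_set S ! k..x} \<subseteq> S" "t \<le> x - sorted_list_of_set S ! k"
  shows "k + t < card S" "sorted_list_of_set S ! (k + t) = sorted_list_of_set S ! k + t"
proof -
  let ?y = "sorted_list_of_set S ! k"
  have "{z\<in>S. z < ?y + t} = {z\<in>S. z < ?y} \<union> {?y..<?y + t}" using assms(3,4) by fastforce
  moreover have "card ({z\<in>S. z < ?y} \<union> {?y..<?y + t}) = card {z\<in>S. z < ?y} + card {?y..<?y + t}"
    using assms(1) by (intro card_Un_disjoint) auto
  ultimately have "card {z\<in>S. z < ?y + t} = k + t" using card_less_sorted_list_of_set_nth[OF assms(1,2)] by simp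
  moreover have "?y + t \<in> S"
    using assms(3,4) sorted_list_of_set_nth_mem[OF assms(1,2)] by (cases "t = 0") auto
  ultimately show "sorted_list_of_set S ! (k + t) = ?y + t" "k + t < card S"
    using sorted_list_of_set_nth_eqI[OF assms(1)] obtain_sorted_list_of_set_index[OF assms(1)]
      card_less_sorted_list_of_set_nth[OF assms(1)] by (metis, metis)
qed

lemma sorted_list_of_set_nth_superset_le:
  fixes A B :: "'a::linorder set"
  assumes "finite B" "A \<subseteq> B" "k < card A"
  shows "sorted_list_of_set B ! k \<le> sorted_list_of_set A ! k"
proof (rule ccontr)
  let ?x = "sorted_list_of_set A ! k"
  have fA: "finite A" using assms finite_subset by blast
  have kB: "k < card B" using assms card_mono by (metis order.strict_trans2)
  assume "\<not> ?thesis"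
  then have "{y\<in>A. y \<le> ?x} \<subseteq> {y\<in>B. y < sorted_list_of_set B ! k}" using assms by auto
  then have "card {y\<in>A. y \<le> ?x} \<le> k"
    using card_mono card_less_sorted_list_of_set_nth[OF assms(1) kB] assms(1)
    by (metis (no_types, lifting) finite_subset mem_Collect_eq subsetI)
  moreover have "{y\<in>A. y \<le> ?x} = insert ?x {y\<in>A. y < ?x}"
    using sorted_list_of_set_nth_mem[OF fA assms(3)] by auto
  then have "card {y\<in>A. y \<le> ?x} = Suc k" using card_less_sorted_list_of_set_nth[OF fA assms(3)] fA by simp
  ultimately show False by simp
qed

lemma sorted_list_of_set_nth_ge_Suc:
  assumes "finite S" "S \<subseteq> {1..(N::nat)}" "k < card S"
  shows "Suc k \<le> sorted_list_of_set S ! k"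
proof -
  let ?x = "sorted_list_of_set S ! k"
  have "{y\<in>S. y < ?x} \<subseteq> {1..<?x}" using assms by auto
  then have "card {y\<in>S. y < ?x} \<le> card {1..<?x}" by (intro card_mono) auto
  then have "k \<le> ?x - 1" using card_less_sorted_list_of_set_nth[OF assms(1,3)] by simp
  moreover have "1 \<le> ?x" using sorted_list_of_set_nth_mem[OF assms(1,3)] assms(2) by auto
  ultimately show ?thesis by simp
qed

lemma sorted_list_of_set_image_strict_mono:
  fixes f :: "nat \<Rightarrow> 'a::linorder"
  assumes "\<And>i i'. 1 \<le> i \<Longrightarrow> i < i' \<Longrightarrow> i' \<le> m \<Longrightarrow> f i < f i'"
  shows "sorted_list_of_set (f ` {1..m}) = map f [1..<Suc m]"
proof -
  have "sorted_wrt (<) (map f [1..<Suc m])"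
    unfolding sorted_wrt_map by (rule sorted_wrt_mono_rel[OF _ sorted_wrt_upt]) (auto intro: assms)
  then show ?thesis
    by (metis List.finite_set set_map set_upt atLeastLessThanSuc_atLeastAtMost
        sorted_list_of_set.idem_if_sorted_distinct strict_sorted_iff)
qed

lemma sorted_list_of_set_atLeastAtMost_nth:
  "1 \<le> i \<Longrightarrow> i \<le> n \<Longrightarrow> sorted_list_of_set {1..(n::nat)} ! (i - 1) = i"
  by (simp del: upt_Suc add: atLeastLessThanSuc_atLeastAtMost[symmetric])

lemma initial_segment_eq:
  assumes "S \<subseteq> {1..(n::nat)}" "\<And>i i'. i \<in> S \<Longrightarrow> 1 \<le> i' \<Longrightarrow> i' \<le> i \<Longrightarrow> i' \<in> S"
  shows "S = {1..card S}"
proof (cases "S = {}")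
  case False
  have fin: "finite S" using assms(1) finite_subset by blast
  have "S = {1..Max S}" using assms Max_in[OF fin False] fin by fastforce
  then show ?thesis by (metis card_atLeastAtMost diff_Suc_1)
qed simp

section \<open>Clumps and 312-free steps\<close>

text \<open>For \<open>A = B h\<close> and \<open>S = B (h + 1)\<close> in the chain of a permutation, a violation \<open>u < v < w\<close>
  with \<open>u\<close> new in \<open>S\<close>, \<open>w \<in> A\<close> and \<open>v \<notin> S\<close> is exactly an \<open>R\<close>-312 pattern across the carrels
  \<open>h\<close> and \<open>h + 1\<close>.\<close>

definition step_312_free :: "nat set \<Rightarrow> nat set \<Rightarrow> bool" where
  "step_312_free A S \<longleftrightarrow> (\<forall>u\<in>S - A. \<forall>w\<in>A. \<forall>v. u < v \<longrightarrow> v < w \<longrightarrow> v \<in> S)"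

lemma step_312_free_iff_interval:
  assumes "finite S" "A \<subseteq> S" "A \<noteq> {}" "S - A \<noteq> {}"
  shows "step_312_free A S \<longleftrightarrow> (Min (S - A) \<le> Max A \<longrightarrow> {Min (S - A)..Max A} \<subseteq> S)"
proof
  have fin: "finite A" "finite (S - A)" using assms finite_subset by auto
  have mins: "Min (S - A) \<in> S - A" "Max A \<in> A"
    using Min_in[OF fin(2) assms(4)] Max_in[OF fin(1) assms(3)] by auto
  assume free: "step_312_free A S"
  show "Min (S - A) \<le> Max A \<longrightarrow> {Min (S - A)..Max A} \<subseteq> S"
  proof (intro impI subsetI)
    fix v assume "v \<in> {Min (S - A)..Max A}"
    then consider "v = Min (S - A)" | "v = Max A" | "Min (S - A) < v" "v < Max A" by force
    then show "v \<in> S" using free mins assms(2) unfolding step_312_free_def by cases blast+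
  qed
next
  have fin: "finite A" "finite (S - A)" using assms finite_subset by auto
  assume "Min (S - A) \<le> Max A \<longrightarrow> {Min (S - A)..Max A} \<subseteq> S"
  moreover have "Min (S - A) \<le> u" "w \<le> Max A" if "u \<in> S - A" "w \<in> A" for u w
    using that fin by auto
  ultimately show "step_312_free A S"
    unfolding step_312_free_def by (meson atLeastAtMost_iff less_imp_le order.trans subsetD)
qed

lemma clumpE:
  assumes "is_clump S L"
  obtains a b where "a \<le> b" "L = {a..b}" "{a..b} \<subseteq> S" "0 < a \<Longrightarrow> a - 1 \<notin> S" "Suc b \<notin> S"
    "Min L = a"
proof -
  obtain a b where "a \<le> b" "L = {a..b}" "{a..b} \<subseteq> S" "0 < a \<longrightarrow> a - 1 \<notin> S" "Suc b \<notin> S"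
    using assms unfolding is_clump_def by blast
  moreover have "Min {a..b} = a" using \<open>a \<le> b\<close> by (auto intro: Min_eqI)
  ultimately show ?thesis using that by blast
qed

lemma clump_exists:
  assumes "finite S" "x \<in> S"
  shows "\<exists>L. is_clump S L \<and> x \<in> L"
proof -
  define As where "As = {y. y \<le> x \<and> {y..x} \<subseteq> S}"
  define Bs where "Bs = {y. x \<le> y \<and> {x..y} \<subseteq> S}"
  have finA: "finite As" unfolding As_def by (rule finite_subset[of _ "{..x}"]) auto
  have finB: "finite Bs" unfolding Bs_def by (rule finite_subset[OF _ assms(1)]) auto
  have "x \<in> As" "x \<in> Bs" unfolding As_def Bs_def using assms by auto
  then have aA: "Min As \<in> As" and bB: "Max Bs \<in> Bs"
    using Min_in[OF finA] Max_in[OF finB] by blast+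
  define a where "a = Min As"
  define b where "b = Max Bs"
  have "a - 1 \<notin> S" if "0 < a"
  proof
    assume "a - 1 \<in> S"
    have "{a - 1..x} = insert (a - 1) {a..x}" using that aA unfolding a_def As_def by auto
    then have "a - 1 \<in> As" using aA \<open>a - 1 \<in> S\<close> unfolding a_def As_def by auto
    then have "a \<le> a - 1" unfolding a_def using finA by simp
    then show False using that by simp
  qed
  moreover have "Suc b \<notin> S"
  proof
    assume "Suc b \<in> S"
    have "{x..Suc b} = insert (Suc b) {x..b}" using bB unfolding b_def Bs_def by auto
    then have "Suc b \<in> Bs" using bB \<open>Suc b \<in> S\<close> unfolding b_def Bs_def by auto
    then have "Suc b \<le> b" unfolding b_def using finB by simp
    then show False by simp
  qed
  moreover have "{a..b} \<subseteq> S" "a \<le> x" "x \<le> b"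
    using aA bB unfolding a_def b_def As_def Bs_def by (force, auto)
  ultimately show ?thesis unfolding is_clump_def by (intro exI[of _ "{a..b}"]) auto
qed

lemma step_312_free_if_rightmost_clumps:
  assumes fin: "finite S" and AS: "A \<subseteq> S"
    and "\<exists>L. is_clump S L \<and> \<Union>{L'. is_clump S L' \<and> Min L < Min L'} \<subseteq> S - A
            \<and> S - A \<subseteq> \<Union>{L'. is_clump S L' \<and> Min L \<le> Min L'}"
  shows "step_312_free A S"
proof -
  obtain L where L: "\<Union>{L'. is_clump S L' \<and> Min L < Min L'} \<subseteq> S - A"
    "S - A \<subseteq> \<Union>{L'. is_clump S L' \<and> Min L \<le> Min L'}" using assms(3) by blast
  show "step_312_free A S" unfolding step_312_free_def
  proof (intro ballI allI impI)
    fix u v w assume u: "u \<in> S - A" and w: "w \<in> A" and uvw: "u < v" "v < w"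
    obtain L1 where L1: "is_clump S L1" "Min L \<le> Min L1" "u \<in> L1" using L(2) u by blast
    obtain L2 where L2: "is_clump S L2" "w \<in> L2" using clump_exists[OF fin] w AS by blast
    have "\<not> Min L < Min L2" using L(1) L2 w by blast
    then have "Min L2 \<le> Min L1" using L1(2) by simp
    moreover obtain a1 b1 where "L1 = {a1..b1}" "Min L1 = a1" by (rule clumpE[OF L1(1)]) blast
    moreover obtain a2 b2 where a2: "L2 = {a2..b2}" "{a2..b2} \<subseteq> S" "Min L2 = a2"
      by (rule clumpE[OF L2(1)]) blast
    ultimately have "v \<in> {a2..b2}" using L1(3) L2(2) uvw by auto
    then show "v \<in> S" using a2(2) by blast
  qed
qed

lemma rightmost_clumps_if_step_312_free:
  assumes fin: "finite S" and ne: "S - A \<noteq> {}" and free: "step_312_free A S"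
  shows "\<exists>L. is_clump S L \<and> \<Union>{L'. is_clump S L' \<and> Min L < Min L'} \<subseteq> S - A
            \<and> S - A \<subseteq> \<Union>{L'. is_clump S L' \<and> Min L \<le> Min L'}"
proof -
  define u0 where "u0 = Min (S - A)"
  have u0: "u0 \<in> S - A" unfolding u0_def using Min_in fin ne by blast
  obtain L where L: "is_clump S L" "u0 \<in> L" using clump_exists[OF fin] u0 by blast
  obtain a b where ab: "L = {a..b}" "{a..b} \<subseteq> S" "0 < a \<Longrightarrow> a - 1 \<notin> S" "Min L = a"
    by (rule clumpE[OF L(1)]) blast
  have "L' \<subseteq> S - A" if L': "is_clump S L'" "Min L < Min L'" for L'
  proof
    fix y assume y: "y \<in> L'"
    obtain a' b' where ab': "L' = {a'..b'}" "{a'..b'} \<subseteq> S" "0 < a' \<Longrightarrow> a' - 1 \<notin> S" "Min L' = a'"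
      by (rule clumpE[OF L'(1)]) blast
    have gap: "a' - 1 \<notin> S" using ab' L'(2) ab by simp
    have "u0 < a' - 1"
    proof (rule ccontr)
      assume "\<not> u0 < a' - 1"
      then have "a' - 1 \<in> {a..b}" using L(2) ab ab' L'(2) by auto
      then show False using gap ab by blast
    qed
    moreover have "a' - 1 < y" "y \<in> S" using y ab' L'(2) ab by auto
    ultimately show "y \<in> S - A" using free u0 gap unfolding step_312_free_def by blast
  qed
  moreover have "\<exists>L'. is_clump S L' \<and> Min L \<le> Min L' \<and> x \<in> L'" if x: "x \<in> S - A" for x
  proof -
    obtain L' where L': "is_clump S L'" "x \<in> L'" using clump_exists[OF fin] x by blast
    obtain a' b' where ab': "L' = {a'..b'}" "{a'..b'} \<subseteq> S" "Min L' = a'"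
      by (rule clumpE[OF L'(1)]) blast
    have "u0 \<le> x" unfolding u0_def using fin x by simp
    have "a \<le> a'"
    proof (rule ccontr)
      assume "\<not> a \<le> a'"
      then have "a - 1 \<in> {a'..b'}" using L'(2) ab' \<open>u0 \<le> x\<close> L(2) ab by auto
      then show False using ab' ab \<open>\<not> a \<le> a'\<close> by auto
    qed
    then show ?thesis using L' ab ab' by auto
  qed
  ultimately show "\<exists>L. is_clump S L \<and> \<Union>{L'. is_clump S L' \<and> Min L < Min L'} \<subseteq> S - A
            \<and> S - A \<subseteq> \<Union>{L'. is_clump S L' \<and> Min L \<le> Min L'}"
    using L(1) by blast
qed

lemma rightmost_clumps_iff_step_312_free:
  assumes "finite S" "A \<subseteq> S" "S - A \<noteq> {}"
  shows "(\<exists>L. is_clump S L \<and> \<Union>{L'. is_clump S L' \<and> Min L < Min L'} \<subseteq> S - A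
            \<and> S - A \<subseteq> \<Union>{L'. is_clump S L' \<and> Min L \<le> Min L'})
     \<longleftrightarrow> step_312_free A S"
  using step_312_free_if_rightmost_clumps[OF assms(1,2)] rightmost_clumps_if_step_312_free[OF assms(1,3)]
  by (intro iffI)

lemma obtain_entry_step:
  assumes "h' \<le> h" "u \<in> B h" "u \<notin> B h'"
  obtains g where "h' \<le> g" "g < h" "u \<in> B (Suc g)" "u \<notin> B g"
  using assms
proof (induction h rule: dec_induct)
  case (step m)
  then show ?case by (cases "u \<in> B m") (auto intro: less_SucI)
qed simp

section \<open>Shapes, chains, keys and permutations\<close>

locale partition_shape =
  fixes n :: nat and lam :: "nat \<Rightarrow> nat"
  assumes n_pos: "1 \<le> n" and partition: "is_partition n lam"
begin

abbreviation "R \<equiv> R_of n lam"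
abbreviation "r \<equiv> card R"
abbreviation "qR \<equiv> q R n"
abbreviation "\<zeta> \<equiv> zeta n lam"

lemma lam_antimono: "1 \<le> i \<Longrightarrow> i \<le> j \<Longrightarrow> j \<le> n \<Longrightarrow> lam j \<le> lam i"
  using partition unfolding is_partition_def by blast

lemma zeta_rows: "{i\<in>{1..n}. j \<le> lam i} = {1..\<zeta> j}"
  unfolding zeta_def by (rule initial_segment_eq[of _ n]) (auto intro: order.trans[OF _ lam_antimono])

lemma zeta_le: "\<zeta> j \<le> n"
proof -
  have "card {i\<in>{1..n}. j \<le> lam i} \<le> card {1..n}" by (rule card_mono) auto
  then show ?thesis unfolding zeta_def by simp
qed

lemma le_lam_iff_le_zeta: "1 \<le> i \<Longrightarrow> i \<le> n \<Longrightarrow> j \<le> lam i \<longleftrightarrow> i \<le> \<zeta> j"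
  using zeta_rows[of j] by (metis (no_types, lifting) atLeastAtMost_iff mem_Collect_eq)

lemma in_shape_iff: "in_shape n lam j i \<longleftrightarrow> 1 \<le> j \<and> 1 \<le> i \<and> i \<le> \<zeta> j"
  unfolding in_shape_def using le_lam_iff_le_zeta zeta_le order.trans by blast

lemma zeta_antimono: "j \<le> j' \<Longrightarrow> \<zeta> j' \<le> \<zeta> j"
  unfolding zeta_def by (intro card_mono) auto

lemma zeta_pos_iff: "1 \<le> \<zeta> j \<longleftrightarrow> j \<le> lam 1"
  using le_lam_iff_le_zeta[of 1 j] n_pos by simp

lemma in_shape_column: "in_shape n lam j i \<Longrightarrow> 1 \<le> j \<and> j \<le> lam 1"
  using in_shape_iff zeta_pos_iff by (meson order.trans)

lemma R_subset: "R \<subseteq> {1..<n}"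
  unfolding R_of_def using zeta_pos_iff by auto

lemma finite_R: "finite R"
  using R_subset finite_subset by blast

lemma qR_strict_mono: "h < h' \<Longrightarrow> h' \<le> r + 1 \<Longrightarrow> qR h < qR h'"
proof -
  have "sorted_wrt (<) (0 # sorted_list_of_set R @ [n])"
    using finite_R R_subset n_pos by (auto simp: sorted_wrt_append)
  moreover have "length (0 # sorted_list_of_set R @ [n]) = r + 2" using finite_R by simp
  ultimately show "h < h' \<Longrightarrow> h' \<le> r + 1 \<Longrightarrow> qR h < qR h'"
    unfolding q_def using sorted_wrt_nth_less by (metis Suc_eq_plus1 add_2_eq_Suc' le_imp_less_Suc)
qed

lemma qR_mono: "h \<le> h' \<Longrightarrow> h' \<le> r + 1 \<Longrightarrow> qR h \<le> qR h'"
  using qR_strict_mono by (cases "h = h'") (auto intro: less_imp_le)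

lemma qR_eq_iff: "h \<le> r + 1 \<Longrightarrow> h' \<le> r + 1 \<Longrightarrow> qR h = qR h' \<longleftrightarrow> h = h'"
  using qR_strict_mono by (metis linorder_neqE_nat order.irrefl)

lemma qR_0: "qR 0 = 0"
  unfolding q_def by simp

lemma qR_last: "qR (r + 1) = n"
  unfolding q_def using finite_R by (simp add: nth_append)

lemma qR_le_n: "h \<le> r + 1 \<Longrightarrow> qR h \<le> n"
  using qR_mono[of h "r + 1"] qR_last by simp

lemma qR_pos: "1 \<le> h \<Longrightarrow> h \<le> r + 1 \<Longrightarrow> 1 \<le> qR h"
  using qR_strict_mono[of 0 h] qR_0 by simp

lemma qR_nth: "1 \<le> h \<Longrightarrow> h \<le> r \<Longrightarrow> qR h = sorted_list_of_set R ! (h - 1)"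
  unfolding q_def using finite_R by (cases h) (auto simp: nth_append)

lemma qR_in_R: "1 \<le> h \<Longrightarrow> h \<le> r \<Longrightarrow> qR h \<in> R"
  using qR_nth sorted_list_of_set_nth_mem[OF finite_R, of "h - 1"] by simp

lemma R_obtain_qR:
  assumes "x \<in> R"
  obtains h where "1 \<le> h" "h \<le> r" "qR h = x"
proof -
  obtain k where "k < r" "sorted_list_of_set R ! k = x"
    using obtain_sorted_list_of_set_index[OF finite_R assms] .
  then show ?thesis using qR_nth[of "Suc k"] that[of "Suc k"] by simp
qed

definition col_level :: "nat \<Rightarrow> nat" where
  "col_level j = (THE h. h \<le> r + 1 \<and> qR h = \<zeta> j)"

lemma col_level_exists: "1 \<le> j \<Longrightarrow> j \<le> lam 1 \<Longrightarrow> \<exists>h. 1 \<le> h \<and> h \<le> r + 1 \<and> qR h = \<zeta> j"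
proof (cases "\<zeta> j < n")
  case True
  assume "1 \<le> j" "j \<le> lam 1"
  then have "\<zeta> j \<in> R" using True unfolding R_of_def by auto
  then show ?thesis using R_obtain_qR by (metis le_SucI Suc_eq_plus1)
next
  case False
  then show ?thesis using zeta_le[of j] qR_last by (intro exI[of _ "r + 1"]) auto
qed

lemma col_level:
  assumes "1 \<le> j" "j \<le> lam 1"
  shows "1 \<le> col_level j" "col_level j \<le> r + 1" "qR (col_level j) = \<zeta> j"
proof -
  obtain h where h: "1 \<le> h" "h \<le> r + 1" "qR h = \<zeta> j" using col_level_exists assms by blast
  have "col_level j = h" unfolding col_level_def
    by (rule the_equality) (use h qR_eq_iff in metis)+
  then show "1 \<le> col_level j" "col_level j \<le> r + 1" "qR (col_level j) = \<zeta> j" using h by auto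
qed

lemma col_level_eqI:
  "1 \<le> j \<Longrightarrow> j \<le> lam 1 \<Longrightarrow> h \<le> r + 1 \<Longrightarrow> qR h = \<zeta> j \<Longrightarrow> col_level j = h"
  using col_level qR_eq_iff by metis

lemma col_level_antimono:
  assumes "1 \<le> j" "j \<le> j'" "j' \<le> lam 1"
  shows "col_level j' \<le> col_level j"
proof (rule ccontr)
  assume "\<not> ?thesis"
  then have "qR (col_level j) < qR (col_level j')" using qR_strict_mono col_level(2)[of j'] assms by simp
  then show False using col_level(3)[of j] col_level(3)[of j'] zeta_antimono[of j j'] assms by simp
qed

lemma col_level_surj: "1 \<le> h \<Longrightarrow> h \<le> r \<Longrightarrow> \<exists>j. 1 \<le> j \<and> j \<le> lam 1 \<and> col_level j = h"
proof -
  assume h: "1 \<le> h" "h \<le> r"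
  then have "qR h \<in> R" by (rule qR_in_R)
  then obtain j where "1 \<le> j" "j \<le> lam 1" "\<zeta> j = qR h" unfolding R_of_def by auto
  then show ?thesis using col_level_eqI[of j h] h by auto
qed

definition carrel :: "nat \<Rightarrow> nat" where
  "carrel i = (THE h. 1 \<le> h \<and> h \<le> r + 1 \<and> qR (h - 1) < i \<and> i \<le> qR h)"

lemma carrel_unique:
  assumes "1 \<le> h" "h \<le> r + 1" "qR (h - 1) < i" "i \<le> qR h"
    and "1 \<le> h'" "h' \<le> r + 1" "qR (h' - 1) < i" "i \<le> qR h'"
  shows "h = h'"
proof (rule ccontr)
  assume "h \<noteq> h'"
  then consider "h < h'" | "h' < h" by linarith
  then show False
  proof cases
    case 1
    then have "qR h \<le> qR (h' - 1)" using qR_mono assms by simp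
    then show False using assms by simp
  next
    case 2
    then have "qR h' \<le> qR (h - 1)" using qR_mono assms by simp
    then show False using assms by simp
  qed
qed

lemma carrel_eqI:
  "1 \<le> h \<Longrightarrow> h \<le> r + 1 \<Longrightarrow> qR (h - 1) < i \<Longrightarrow> i \<le> qR h \<Longrightarrow> carrel i = h"
  unfolding carrel_def by (rule the_equality) (use carrel_unique in blast)+

lemma carrel_exists:
  assumes "1 \<le> i" "i \<le> n"
  shows "\<exists>h. 1 \<le> h \<and> h \<le> r + 1 \<and> qR (h - 1) < i \<and> i \<le> qR h"
proof -
  define h where "h = (LEAST h. i \<le> qR h)"
  have ex: "i \<le> qR (r + 1)" using qR_last assms by simp
  have "i \<le> qR h" "h \<le> r + 1" unfolding h_def using LeastI[of _ "r + 1"] Least_le ex by auto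
  moreover have "1 \<le> h" using calculation qR_0 assms by (cases h) auto
  moreover have "\<not> i \<le> qR (h - 1)"
    unfolding h_def using calculation(3) h_def by (metis Least_le diff_less not_le zero_less_one less_le_trans)
  ultimately show ?thesis by auto
qed

lemma carrel:
  assumes "1 \<le> i" "i \<le> n"
  shows "1 \<le> carrel i" "carrel i \<le> r + 1" "qR (carrel i - 1) < i" "i \<le> qR (carrel i)"
  using carrel_exists[OF assms] carrel_eqI by metis+

lemma carrel_row_end:
  assumes "1 \<le> i" "i \<le> n" "1 \<le> lam i"
  shows "carrel i = col_level (lam i)"
proof -
  have lj: "lam i \<le> lam 1" using lam_antimono assms by simp
  let ?h = "col_level (lam i)"
  note H = col_level[OF assms(3) lj]
  have "qR (?h - 1) < i"
  proof (cases "?h - 1 = 0")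
    case True then show ?thesis using qR_0 assms by simp
  next
    case False
    then have "1 \<le> ?h - 1" "?h - 1 \<le> r" using H by auto
    then obtain j' where j': "1 \<le> j'" "j' \<le> lam 1" "col_level j' = ?h - 1"
      using col_level_surj by blast
    have "qR (?h - 1) < qR ?h" using qR_strict_mono[of "?h - 1" ?h] H by simp
    then have "lam i < j'" using col_level[OF j'(1,2)] j' H zeta_antimono by (metis not_le)
    then show ?thesis using le_lam_iff_le_zeta[OF assms(1,2), of j'] col_level[OF j'(1,2)] j' by simp
  qed
  moreover have "i \<le> qR ?h" using H le_lam_iff_le_zeta[OF assms(1,2), of "lam i"] by simp
  ultimately show ?thesis using carrel_eqI H by simp
qed

lemma carrel_empty_row:
  assumes "1 \<le> i" "i \<le> n" "lam i = 0"
  shows "carrel i = r + 1"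
proof -
  have "qR r < i"
  proof (cases "r = 0")
    case True then show ?thesis using qR_0 assms by simp
  next
    case False
    then obtain j' where j': "1 \<le> j'" "j' \<le> lam 1" "col_level j' = r" using col_level_surj[of r] by auto
    then show ?thesis using le_lam_iff_le_zeta[OF assms(1,2), of j'] col_level[OF j'(1,2)] assms by simp
  qed
  then show ?thesis using carrel_eqI[of "r + 1" i] qR_last assms by simp
qed

lemma R_chain_mono:
  assumes "R_chain R n B" "h \<le> h'" "h' \<le> r + 1"
  shows "B h \<subseteq> B h'"
  using assms(2,3)
proof (induction h' rule: dec_induct)
  case (step m)
  then have "B m \<subset> B (Suc m)" using assms(1) unfolding R_chain_def by simp
  then show ?case using step by auto
qed simp

lemma
  assumes "R_chain R n B"
  shows R_chain_0: "B 0 = {}" and R_chain_last: "B (r + 1) = {1..n}"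
    and R_chain_card: "h \<le> r + 1 \<Longrightarrow> card (B h) = qR h"
    and R_chain_beyond: "r + 1 < h \<Longrightarrow> B h = {}"
  using assms unfolding R_chain_def by auto

lemma R_chain_subset: "R_chain R n B \<Longrightarrow> h \<le> r + 1 \<Longrightarrow> B h \<subseteq> {1..n}"
  using R_chain_mono[of B h "r + 1"] R_chain_last[of B] by simp

lemma R_chain_finite: "R_chain R n B \<Longrightarrow> h \<le> r + 1 \<Longrightarrow> finite (B h)"
  using R_chain_subset finite_subset by blast

lemma R_chain_new_nonempty:
  "R_chain R n B \<Longrightarrow> h \<le> r \<Longrightarrow> B (Suc h) - B h \<noteq> {}"
  unfolding R_chain_def by auto

lemma R_chainI:
  assumes "B 0 = {}" "B (r + 1) = {1..n}" "\<And>h. h \<le> r \<Longrightarrow> B h \<subseteq> B (Suc h)"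
    "\<And>h. h \<le> r + 1 \<Longrightarrow> card (B h) = qR h" "\<And>h. r + 1 < h \<Longrightarrow> B h = {}"
  shows "R_chain R n B"
proof -
  have "B h \<subset> B (Suc h)" if "h \<le> r" for h
    using assms(3,4)[of h] assms(4)[of "Suc h"] qR_strict_mono[of h "Suc h"] that by auto
  then show ?thesis unfolding R_chain_def using assms by auto
qed

lemma key_of_chain_eq:
  "key_of_chain n lam B j i =
     (if in_shape n lam j i then sorted_list_of_set (B (col_level j)) ! (i - 1) else 0)"
  unfolding key_of_chain_def col_level_def by simp

lemma colset_key_of_chain:
  assumes "R_chain R n B" "1 \<le> j" "j \<le> lam 1"
  shows "colset n lam (key_of_chain n lam B) j = B (col_level j)"
proof -
  note H = col_level[OF assms(2,3)]
  have fin: "finite (B (col_level j))" and card: "card (B (col_level j)) = \<zeta> j"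
    using R_chain_finite R_chain_card assms H by auto
  let ?xs = "sorted_list_of_set (B (col_level j))"
  have "colset n lam (key_of_chain n lam B) j = (\<lambda>i. ?xs ! (i - 1)) ` {1..\<zeta> j}"
    unfolding colset_def key_of_chain_eq in_shape_iff using assms(2) by auto
  also have "\<dots> = (\<lambda>k. ?xs ! k) ` {..<length ?xs}"
    unfolding image_Suc_lessThan[symmetric] image_image using fin card by simp
  also have "\<dots> = set ?xs"
    by (auto simp: in_set_conv_nth)
  also have "\<dots> = B (col_level j)"
    using fin by simp
  finally show ?thesis .
qed

lemma key_of_chain_is_key:
  assumes B: "R_chain R n B"
  shows "is_key n lam (key_of_chain n lam B)"
proof -
  let ?Y = "key_of_chain n lam B"
  have col: "finite (B (col_level j)) \<and> card (B (col_level j)) = \<zeta> j \<and> B (col_level j) \<subseteq> {1..n}"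
    if "1 \<le> j" "j \<le> lam 1" for j
    using col_level[OF that] R_chain_finite[OF B] R_chain_card[OF B] R_chain_subset[OF B] by simp
  have "?Y j i \<in> {1..n}" if "in_shape n lam j i" for j i
    using sorted_list_of_set_nth_mem[of "B (col_level j)" "i - 1"] col in_shape_column[OF that] that
    unfolding key_of_chain_eq in_shape_iff by fastforce
  moreover have "?Y j i < ?Y j (Suc i)" if "in_shape n lam j i" "in_shape n lam j (Suc i)" for j i
    using sorted_list_of_set_nth_less[of "B (col_level j)" "i - 1" i] col in_shape_column[OF that(1)] that
    unfolding key_of_chain_eq in_shape_iff by auto
  moreover have "?Y j i \<le> ?Y (Suc j) i" if "in_shape n lam j i" "in_shape n lam (Suc j) i" for j i
  proof -
    have j: "1 \<le> j" "Suc j \<le> lam 1" using in_shape_column that by auto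
    have "B (col_level (Suc j)) \<subseteq> B (col_level j)"
      using R_chain_mono[OF B] col_level_antimono[of j "Suc j"] col_level(2)[of j] j by simp
    then show ?thesis
      using sorted_list_of_set_nth_superset_le[of "B (col_level j)" _ "i - 1"] col[of j] col[of "Suc j"] j that
      unfolding key_of_chain_eq in_shape_iff by auto
  qed
  ultimately have "tableau n lam ?Y"
    unfolding tableau_def by (auto simp: key_of_chain_eq)
  moreover have "colset n lam ?Y j \<subseteq> colset n lam ?Y l" if "1 \<le> l" "l \<le> j" "j \<le> lam 1" for l j
    using colset_key_of_chain[OF B] R_chain_mono[OF B] col_level_antimono[OF that] col_level(2)[of l] that
    by simp
  ultimately show ?thesis unfolding is_key_def by blast
qed

lemma key_of_chain_inj:
  assumes "R_chain R n B1" "R_chain R n B2" "key_of_chain n lam B1 = key_of_chain n lam B2"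
  shows "B1 = B2"
proof
  fix h
  show "B1 h = B2 h"
  proof (cases "1 \<le> h \<and> h \<le> r")
    case True
    then obtain j where "1 \<le> j" "j \<le> lam 1" "col_level j = h" using col_level_surj by blast
    then show ?thesis using colset_key_of_chain assms by metis
  next
    case False
    then consider "h = 0" | "h = r + 1" | "r + 1 < h" by linarith
    then show ?thesis using assms R_chain_0 R_chain_last R_chain_beyond by cases metis+
  qed
qed

lemma key_column:
  assumes "is_key n lam Y" "1 \<le> j" "j \<le> lam 1"
  shows "card (colset n lam Y j) = \<zeta> j" "colset n lam Y j \<subseteq> {1..n}"
    "\<And>i. 1 \<le> i \<Longrightarrow> i \<le> \<zeta> j \<Longrightarrow> Y j i = sorted_list_of_set (colset n lam Y j) ! (i - 1)"
proof -
  have tab: "tableau n lam Y" using assms(1) unfolding is_key_def by simp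
  have shape: "1 \<le> i \<Longrightarrow> i \<le> \<zeta> j \<Longrightarrow> in_shape n lam j i" for i using in_shape_iff assms by simp
  have cs: "colset n lam Y j = Y j ` {1..\<zeta> j}" unfolding colset_def by auto
  have step: "Y j i < Y j (Suc i)" if "1 \<le> i" "Suc i \<le> \<zeta> j" for i
    using tab shape[of i] shape[of "Suc i"] that unfolding tableau_def by simp
  have strict: "Y j i < Y j (i + Suc d)" if "1 \<le> i" "i + Suc d \<le> \<zeta> j" for i d
    using that
  proof (induction d)
    case (Suc d)
    then show ?case using step[of "i + Suc d"] by simp
  qed (use step in simp)
  have "Y j i < Y j i'" if "1 \<le> i" "i < i'" "i' \<le> \<zeta> j" for i i'
    using strict[of i "i' - i - 1"] that by simp
  then have sl: "sorted_list_of_set (colset n lam Y j) = map (Y j) [1..<Suc (\<zeta> j)]"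
    unfolding cs by (rule sorted_list_of_set_image_strict_mono)
  have "card (colset n lam Y j) = length (sorted_list_of_set (colset n lam Y j))"
    unfolding cs by simp
  then show "card (colset n lam Y j) = \<zeta> j"
    unfolding sl by simp
  show "colset n lam Y j \<subseteq> {1..n}" using tab shape unfolding cs tableau_def by auto
  show "Y j i = sorted_list_of_set (colset n lam Y j) ! (i - 1)" if "1 \<le> i" "i \<le> \<zeta> j" for i
    using that unfolding sl by (simp del: upt_Suc)
qed

lemma key_colset_eq:
  assumes "is_key n lam Y" "1 \<le> j" "j \<le> lam 1" "1 \<le> j'" "j' \<le> lam 1"
    "col_level j = col_level j'"
  shows "colset n lam Y j = colset n lam Y j'"
proof -
  have "\<zeta> j = \<zeta> j'" using col_level(3)[of j] col_level(3)[of j'] assms by simp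
  moreover have "finite (colset n lam Y j)" "finite (colset n lam Y j')"
    using key_column(2)[OF assms(1)] assms finite_subset by (meson finite_atLeastAtMost)+
  moreover have "colset n lam Y j \<subseteq> colset n lam Y j' \<or> colset n lam Y j' \<subseteq> colset n lam Y j"
    using assms(1) assms unfolding is_key_def by (cases "j \<le> j'") auto
  ultimately show ?thesis using card_subset_eq key_column(1)[OF assms(1)] assms by metis
qed

lemma key_colset_full:
  assumes "is_key n lam Y" "1 \<le> j" "j \<le> lam 1" "col_level j = r + 1"
  shows "colset n lam Y j = {1..n}"
proof -
  have "\<zeta> j = n" using col_level(3)[of j] qR_last assms by simp
  then show ?thesis
    using key_column(1,2)[OF assms(1-3)] by (metis card_atLeastAtMost card_subset_eq diff_Suc_1 finite_atLeastAtMost)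
qed

definition some_col :: "nat \<Rightarrow> nat" where
  "some_col h = (SOME j. 1 \<le> j \<and> j \<le> lam 1 \<and> col_level j = h)"

lemma some_col: "1 \<le> h \<Longrightarrow> h \<le> r \<Longrightarrow> 1 \<le> some_col h \<and> some_col h \<le> lam 1 \<and> col_level (some_col h) = h"
  unfolding some_col_def using col_level_surj someI_ex by (metis (mono_tags, lifting))

definition chain_of_key :: "(nat \<Rightarrow> nat \<Rightarrow> nat) \<Rightarrow> nat \<Rightarrow> nat set" where
  "chain_of_key Y h = (if h = 0 then {} else if h \<le> r then colset n lam Y (some_col h)
      else if h = r + 1 then {1..n} else {})"

lemma chain_of_key_col_level:
  assumes "is_key n lam Y" "1 \<le> j" "j \<le> lam 1"
  shows "chain_of_key Y (col_level j) = colset n lam Y j"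
proof (cases "col_level j \<le> r")
  case True
  then show ?thesis unfolding chain_of_key_def using col_level[OF assms(2,3)] some_col[of "col_level j"]
      key_colset_eq[OF assms(1), of "some_col (col_level j)" j] assms by auto
next
  case False
  then have "col_level j = r + 1" using col_level[OF assms(2,3)] by simp
  then show ?thesis unfolding chain_of_key_def using key_colset_full[OF assms] by simp
qed

lemma R_chain_chain_of_key:
  assumes "is_key n lam Y"
  shows "R_chain R n (chain_of_key Y)"
proof (rule R_chainI)
  show "card (chain_of_key Y h) = qR h" if h: "h \<le> r + 1" for h
  proof -
    consider "h = 0" | "1 \<le> h \<and> h \<le> r" | "h = r + 1"
      using h by (cases "h = 0"; cases "h \<le> r") auto
    then show ?thesis
      using some_col[of h] key_column(1)[OF assms, of "some_col h"] col_level(3)[of "some_col h"] qR_0 qR_last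
      unfolding chain_of_key_def by cases auto
  qed
  show "chain_of_key Y h \<subseteq> chain_of_key Y (Suc h)" if h: "h \<le> r" for h
  proof -
    consider "h = 0" | "1 \<le> h \<and> Suc h \<le> r" | "1 \<le> h \<and> h = r"
      using h by (cases "h = 0"; cases "h = r") auto
    then show ?thesis
    proof cases
      case 1
      then show ?thesis by (simp add: chain_of_key_def)
    next
      case 2
      note c = some_col[of h] some_col[of "Suc h"]
      have "some_col (Suc h) \<le> some_col h"
      proof (rule ccontr)
        assume "\<not> ?thesis"
        then have "col_level (some_col (Suc h)) \<le> col_level (some_col h)"
          using col_level_antimono[of "some_col h" "some_col (Suc h)"] c 2 by simp
        then show False using c 2 by simp
      qed
      then show ?thesis unfolding chain_of_key_def using assms c 2 unfolding is_key_def by simp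
    next
      case 3
      then show ?thesis
        using some_col[of h] key_column(2)[OF assms, of "some_col h"] by (simp add: chain_of_key_def)
    qed
  qed
qed (simp_all add: chain_of_key_def)

lemma key_of_chain_chain_of_key:
  assumes "is_key n lam Y"
  shows "key_of_chain n lam (chain_of_key Y) = Y"
proof (intro ext)
  fix j i
  show "key_of_chain n lam (chain_of_key Y) j i = Y j i"
  proof (cases "in_shape n lam j i")
    case True
    then show ?thesis
      using chain_of_key_col_level[OF assms] key_column(3)[OF assms] in_shape_column[OF True]
      unfolding key_of_chain_eq in_shape_iff by auto
  next
    case False
    then show ?thesis using assms unfolding key_of_chain_eq is_key_def tableau_def by simp
  qed
qed

lemma chain_of_eq: "h \<le> r + 1 \<Longrightarrow> chain_of R n \<pi> h = \<pi> ` {1..qR h}"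
  unfolding chain_of_def by simp

lemma R_perm_inj_on: "R_perm R n \<pi> \<Longrightarrow> inj_on \<pi> {1..n}"
  unfolding R_perm_def bij_betw_def by simp

lemma R_perm_image: "R_perm R n \<pi> \<Longrightarrow> \<pi> ` {1..n} = {1..n}"
  unfolding R_perm_def bij_betw_def by simp

lemma mem_chain_of_iff:
  assumes "R_perm R n \<pi>" "h \<le> r + 1" "c \<in> {1..n}"
  shows "\<pi> c \<in> chain_of R n \<pi> h \<longleftrightarrow> c \<le> qR h"
proof -
  have "{1..qR h} \<subseteq> {1..n}" using qR_le_n[OF assms(2)] by auto
  then have "\<pi> c \<in> \<pi> ` {1..qR h} \<longleftrightarrow> c \<in> {1..qR h}"
    using inj_on_image_mem_iff[OF R_perm_inj_on[OF assms(1)] assms(3)] by blast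
  then show ?thesis using chain_of_eq[OF assms(2)] assms(3) by simp
qed

lemma R_chain_chain_of:
  assumes "R_perm R n \<pi>"
  shows "R_chain R n (chain_of R n \<pi>)"
proof (rule R_chainI)
  show "card (chain_of R n \<pi> h) = qR h" if "h \<le> r + 1" for h
    using inj_on_subset[OF R_perm_inj_on[OF assms], of "{1..qR h}"] qR_le_n[OF that] chain_of_eq[OF that]
    by (simp add: card_image)
  show "chain_of R n \<pi> h \<subseteq> chain_of R n \<pi> (Suc h)" if "h \<le> r" for h
    using chain_of_eq[of h] chain_of_eq[of "Suc h"] qR_mono[of h "Suc h"] that by auto
  show "chain_of R n \<pi> (r + 1) = {1..n}"
    using chain_of_eq[of "r + 1"] qR_last R_perm_image[OF assms] by simp
qed (auto simp: chain_of_def qR_0)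

lemma key_of_perm_eq:
  assumes "R_perm R n \<pi>"
  shows "key_of_perm n lam \<pi> = key_of_chain n lam (chain_of R n \<pi>)"
proof (intro ext)
  fix j i
  show "key_of_perm n lam \<pi> j i = key_of_chain n lam (chain_of R n \<pi>) j i"
    using chain_of_eq[of "col_level j"] col_level[OF in_shape_column[THEN conjunct1]
        in_shape_column[THEN conjunct2]]
    unfolding key_of_perm_def key_of_chain_eq by auto
qed

text \<open>Conversely, every \<open>R\<close>-chain is the chain of the \<open>R\<close>-permutation listing each difference
  \<open>B h - B (h - 1)\<close> increasingly on the \<open>h\<close>-th carrel.\<close>

definition perm_of_chain :: "(nat \<Rightarrow> nat set) \<Rightarrow> nat \<Rightarrow> nat" where
  "perm_of_chain B i = (if i \<in> {1..n} then
     sorted_list_of_set (B (carrel i) - B (carrel i - 1)) ! (i - qR (carrel i - 1) - 1) else 0)"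

lemma perm_of_chain_carrel:
  assumes B: "R_chain R n B" and h: "1 \<le> h" "h \<le> r + 1"
  shows "perm_of_chain B ` {Suc (qR (h - 1))..qR h} = B h - B (h - 1)"
    and "\<And>i i'. qR (h - 1) < i \<Longrightarrow> i < i' \<Longrightarrow> i' \<le> qR h \<Longrightarrow> perm_of_chain B i < perm_of_chain B i'"
proof -
  let ?D = "B h - B (h - 1)"
  have sub: "B (h - 1) \<subseteq> B h" using R_chain_mono[OF B, of "h - 1" h] h by simp
  have finD: "finite ?D" using R_chain_finite[OF B h(2)] by simp
  have cardD: "card ?D = qR h - qR (h - 1)"
    using card_Diff_subset[OF R_chain_finite[OF B, of "h - 1"] sub] R_chain_card[OF B] h by simp
  have pv: "perm_of_chain B i = sorted_list_of_set ?D ! (i - qR (h - 1) - 1)"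
    if "qR (h - 1) < i" "i \<le> qR h" for i
    using carrel_eqI[OF h that] qR_le_n[OF h(2)] that unfolding perm_of_chain_def by simp
  show "perm_of_chain B ` {Suc (qR (h - 1))..qR h} = ?D"
  proof (intro set_eqI iffI)
    fix x assume "x \<in> perm_of_chain B ` {Suc (qR (h - 1))..qR h}"
    then obtain i where "qR (h - 1) < i" "i \<le> qR h" "x = perm_of_chain B i"
      by (auto simp: Suc_le_eq)
    moreover have "i - qR (h - 1) - 1 < card ?D" using cardD calculation by linarith
    ultimately show "x \<in> ?D" using pv sorted_list_of_set_nth_mem[OF finD] by simp
  next
    fix x assume "x \<in> ?D"
    then obtain k where k: "k < card ?D" "sorted_list_of_set ?D ! k = x"
      using obtain_sorted_list_of_set_index[OF finD] by blast
    moreover have i: "Suc (qR (h - 1) + k) \<in> {Suc (qR (h - 1))..qR h}" using k cardD by simp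
    ultimately have "perm_of_chain B (Suc (qR (h - 1) + k)) = x" using pv by simp
    then show "x \<in> perm_of_chain B ` {Suc (qR (h - 1))..qR h}" using i by blast
  qed
  show "perm_of_chain B i < perm_of_chain B i'" if "qR (h - 1) < i" "i < i'" "i' \<le> qR h" for i i'
  proof -
    have "i - qR (h - 1) - 1 < i' - qR (h - 1) - 1" "i' - qR (h - 1) - 1 < card ?D"
      using that cardD by auto
    then show ?thesis using pv[of i] pv[of i'] that sorted_list_of_set_nth_less[OF finD] by simp
  qed
qed

lemma perm_of_chain_prefix:
  assumes B: "R_chain R n B" and h: "h \<le> r + 1"
  shows "perm_of_chain B ` {1..qR h} = B h"
  using h
proof (induction h)
  case 0 then show ?case using qR_0 R_chain_0[OF B] by simp
next
  case (Suc h)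
  have "{1..qR (Suc h)} = {1..qR h} \<union> {Suc (qR h)..qR (Suc h)}"
    using qR_mono[of h "Suc h"] Suc.prems by auto
  then have "perm_of_chain B ` {1..qR (Suc h)} = B h \<union> (B (Suc h) - B h)"
    using Suc perm_of_chain_carrel(1)[OF B, of "Suc h"] by (simp add: image_Un)
  also have "\<dots> = B (Suc h)" using R_chain_mono[OF B, of h "Suc h"] Suc.prems by auto
  finally show ?case .
qed

lemma R_chain_obtain_perm:
  assumes B: "R_chain R n B"
  obtains \<pi> where "R_perm R n \<pi>" "chain_of R n \<pi> = B"
proof
  let ?p = "perm_of_chain B"
  have img: "?p ` {1..n} = {1..n}"
    using perm_of_chain_prefix[OF B, of "r + 1"] qR_last R_chain_last[OF B] by simp
  then have "bij_betw ?p {1..n} {1..n}"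
    unfolding bij_betw_def using eq_card_imp_inj_on[of "{1..n}" ?p] by simp
  moreover have "R_tuple n ?p" unfolding R_tuple_def using img by (auto simp: perm_of_chain_def)
  moreover have "R_increasing R n ?p"
    unfolding R_increasing_def using perm_of_chain_carrel(2)[OF B] by auto
  ultimately show "R_perm R n ?p" unfolding R_perm_def by simp
  show "chain_of R n ?p = B"
  proof
    fix h
    show "chain_of R n ?p h = B h"
      using perm_of_chain_prefix[OF B, of h] R_chain_beyond[OF B, of h] unfolding chain_of_def by auto
  qed
qed

section \<open>Three forms of 312-freeness\<close>

definition chain_312_free :: "(nat \<Rightarrow> nat set) \<Rightarrow> bool" where
  "chain_312_free B \<longleftrightarrow> (\<forall>h\<in>{1..r - 1}. step_312_free (B h) (B (Suc h)))"

lemma R312_containing_iff: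
  assumes P: "R_perm R n \<pi>"
  shows "R312_containing R n \<pi> \<longleftrightarrow> \<not> chain_312_free (chain_of R n \<pi>)"
proof
  let ?B = "chain_of R n \<pi>"
  assume "R312_containing R n \<pi>"
  then obtain h a b c where h: "1 \<le> h" "h + 1 \<le> r" and abc: "1 \<le> a" "a \<le> qR h" "qR h < b"
    "b \<le> qR (h + 1)" "qR (h + 1) < c" "c \<le> n" "\<pi> b < \<pi> c" "\<pi> c < \<pi> a"
    unfolding R312_containing_def by auto
  have "a \<in> {1..n}" "b \<in> {1..n}" "c \<in> {1..n}" using abc qR_le_n[of "h + 1"] h by auto
  then have "\<pi> b \<in> ?B (Suc h) - ?B h" "\<pi> a \<in> ?B h" "\<pi> c \<notin> ?B (Suc h)"
    using mem_chain_of_iff[OF P] abc h by auto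
  then show "\<not> chain_312_free ?B"
    unfolding chain_312_free_def step_312_free_def using h abc(7,8) by fastforce
next
  let ?B = "chain_of R n \<pi>"
  assume "\<not> chain_312_free ?B"
  then obtain h u v w where h: "1 \<le> h" "h + 1 \<le> r" and uvw: "u \<in> ?B (Suc h)" "u \<notin> ?B h"
    "w \<in> ?B h" "v \<notin> ?B (Suc h)" "u < v" "v < w"
    unfolding chain_312_free_def step_312_free_def by auto
  obtain b where b: "b \<in> {1..qR (h + 1)}" "u = \<pi> b" using uvw chain_of_eq[of "h + 1"] h by auto
  obtain a where a: "a \<in> {1..qR h}" "w = \<pi> a" using uvw chain_of_eq[of h] h by auto
  have "{1..qR (h + 1)} \<subseteq> {1..n}" using qR_le_n[of "h + 1"] h by auto
  then have "u \<in> {1..n}" "w \<in> {1..n}" using a b R_perm_image[OF P] qR_mono[of h "h + 1"] h by auto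
  then obtain c where c: "c \<in> {1..n}" "v = \<pi> c" using uvw R_perm_image[OF P] by (metis atLeastAtMost_iff
        imageE le_trans less_imp_le_nat)
  have "qR h < b" using mem_chain_of_iff[OF P, of h b] uvw b h qR_le_n[of "h + 1"] by auto
  moreover have "qR (h + 1) < c" using mem_chain_of_iff[OF P, of "h + 1" c] uvw c h by auto
  ultimately show "R312_containing R n \<pi>"
    unfolding R312_containing_def using h a b c uvw by (intro bexI[of _ h]) auto
qed

lemma cols_of_length_key_of_chain:
  assumes B: "R_chain R n B" and h: "1 \<le> h" "h \<le> r"
  shows "cols_of_length n lam (key_of_chain n lam B) (qR h) = B h"
proof -
  have "1 \<le> j \<Longrightarrow> j \<le> lam 1 \<Longrightarrow> \<zeta> j = qR h \<longleftrightarrow> col_level j = h" for j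
    using col_level[of j] qR_eq_iff[of "col_level j" h] h by auto
  then have "{colset n lam (key_of_chain n lam B) j | j. 1 \<le> j \<and> j \<le> lam 1 \<and> \<zeta> j = qR h} = {B h}"
    using colset_key_of_chain[OF B] col_level_surj[OF h] by auto
  then show ?thesis unfolding cols_of_length_def by simp
qed

lemma gapless_key_iff_chain_312_free:
  assumes B: "R_chain R n B"
  shows "gapless_key n lam (key_of_chain n lam B) \<longleftrightarrow> chain_312_free B"
proof -
  let ?Y = "key_of_chain n lam B"
  have "(let Ch = cols_of_length n lam ?Y (qR h); Ch1 = cols_of_length n lam ?Y (qR (h + 1));
            b = Min (Ch1 - Ch); m = Max Ch
        in b \<le> m \<longrightarrow> (\<forall>j. 1 \<le> j \<and> j \<le> lam 1 \<and> \<zeta> j = qR (h + 1) \<longrightarrow> {b..m} \<subseteq> colset n lam ?Y j))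
     \<longleftrightarrow> step_312_free (B h) (B (Suc h))"
    if h: "h \<in> {1..r - 1}" for h
  proof -
    have h': "1 \<le> h" "h + 1 \<le> r" using h by auto
    have "\<zeta> j = qR (h + 1) \<longleftrightarrow> col_level j = h + 1" if "1 \<le> j" "j \<le> lam 1" for j
      using col_level[OF that] qR_eq_iff[of "col_level j" "h + 1"] h' by auto
    moreover obtain j0 where "1 \<le> j0" "j0 \<le> lam 1" "col_level j0 = h + 1"
      using col_level_surj[of "h + 1"] h' by auto
    ultimately have cols: "(\<forall>j. 1 \<le> j \<and> j \<le> lam 1 \<and> \<zeta> j = qR (h + 1) \<longrightarrow> X \<subseteq> colset n lam ?Y j)
        \<longleftrightarrow> X \<subseteq> B (h + 1)" for X
      using colset_key_of_chain[OF B] by metis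
    have "B h \<noteq> {}" using R_chain_card[OF B, of h] qR_pos[of h] h' by auto
    then have "step_312_free (B h) (B (Suc h))
        \<longleftrightarrow> (Min (B (Suc h) - B h) \<le> Max (B h) \<longrightarrow> {Min (B (Suc h) - B h)..Max (B h)} \<subseteq> B (Suc h))"
      using step_312_free_iff_interval R_chain_finite[OF B] R_chain_mono[OF B, of h "Suc h"]
        R_chain_new_nonempty[OF B, of h] h' by simp
    then show ?thesis
      using cols cols_of_length_key_of_chain[OF B, of h] cols_of_length_key_of_chain[OF B, of "h + 1"] h'
      by (simp add: Let_def)
  qed
  then show ?thesis
    unfolding gapless_key_def chain_312_free_def using key_of_chain_is_key[OF B] by simp
qed

lemma step_312_free_last:
  assumes B: "R_chain R n B"
  shows "step_312_free (B r) (B (Suc r))"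
  using R_chain_subset[OF B, of r] R_chain_last[OF B] unfolding step_312_free_def by auto

lemma chain_312_free_step:
  assumes B: "R_chain R n B" and free: "chain_312_free B" and h: "1 \<le> h" "h \<le> r"
  shows "step_312_free (B h) (B (Suc h))"
  using free step_312_free_last[OF B] h unfolding chain_312_free_def by (cases "h = r") auto

lemma rightmost_clump_deleting_iff_chain_312_free:
  assumes B: "R_chain R n B"
  shows "rightmost_clump_deleting R n B \<longleftrightarrow> chain_312_free B"
proof -
  have "rightmost_clump_deleting R n B \<longleftrightarrow> (\<forall>h\<in>{1..r}. step_312_free (B h) (B (Suc h)))"
    unfolding rightmost_clump_deleting_def
  proof (intro ball_cong[OF refl] rightmost_clumps_iff_step_312_free)
    fix h assume "h \<in> {1..r}"
    then show "finite (B (Suc h))" "B h \<subseteq> B (Suc h)" "B (Suc h) - B h \<noteq> {}"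
      using R_chain_finite[OF B] R_chain_mono[OF B] R_chain_new_nonempty[OF B] by auto
  qed
  also have "\<dots> \<longleftrightarrow> chain_312_free B"
  proof (intro iffI ballI)
    assume "\<forall>h\<in>{1..r}. step_312_free (B h) (B (Suc h))"
    then show "chain_312_free B" unfolding chain_312_free_def by auto
  next
    fix h assume "chain_312_free B" "h \<in> {1..r}"
    then show "step_312_free (B h) (B (Suc h))" using chain_312_free_step[OF B] by simp
  qed
  finally show ?thesis .
qed

section \<open>Rank tuples and maximal tableaux\<close>

definition rank_tuple :: "(nat \<Rightarrow> nat set) \<Rightarrow> nat \<Rightarrow> nat" where
  "rank_tuple B i = (if i \<in> {1..n} then sorted_list_of_set (B (carrel i)) ! (i - 1) else 0)"

lemma rank_tuple_carrel:
  assumes "1 \<le> h" "h \<le> r + 1" "qR (h - 1) < i" "i \<le> qR h"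
  shows "rank_tuple B i = sorted_list_of_set (B h) ! (i - 1)"
  using carrel_eqI[OF assms] qR_le_n[OF assms(2)] assms unfolding rank_tuple_def by simp

text \<open>Since \<open>card (B h) = qR h\<close>, the \<open>(qR h - i + 1)\<close>-th largest element of \<open>B h\<close> is its \<open>i\<close>-th
  smallest one.\<close>

lemma Psi_eq_rank_tuple:
  assumes P: "R_perm R n \<pi>"
  shows "Psi R n \<pi> = rank_tuple (chain_of R n \<pi>)"
proof
  fix i
  show "Psi R n \<pi> i = rank_tuple (chain_of R n \<pi>) i"
  proof (cases "i \<in> {1..n}")
    case True
    then have i: "1 \<le> i" "i \<le> n" by auto
    note H = carrel[OF i]
    have "(THE h. h \<in> {1..r + 1} \<and> qR (h - 1) < i \<and> i \<le> qR h) = carrel i"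
    proof (rule the_equality)
      fix h assume "h \<in> {1..r + 1} \<and> qR (h - 1) < i \<and> i \<le> qR h"
      then show "h = carrel i" using carrel_eqI[of h i] by simp
    qed (use H in simp)
    moreover have "card (chain_of R n \<pi> (carrel i)) = qR (carrel i)"
      using R_chain_card[OF R_chain_chain_of[OF P]] H by simp
    moreover have "qR (carrel i) - (qR (carrel i) - i + 1) = i - 1" using H i by simp
    ultimately show ?thesis unfolding Psi_def rank_tuple_def rank_def using True by (simp add: Let_def)
  next
    case False
    then show ?thesis unfolding Psi_def rank_tuple_def by (simp only: if_not_P if_False)
  qed
qed

lemma row_end_key_of_chain:
  assumes B: "R_chain R n B"
  shows "row_end n lam (key_of_chain n lam B) = rank_tuple B"
proof
  fix i
  show "row_end n lam (key_of_chain n lam B) i = rank_tuple B i"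
  proof (cases "i \<in> {1..n}")
    case True
    then have i: "1 \<le> i" "i \<le> n" by auto
    show ?thesis
    proof (cases "lam i = 0")
      case True
      then show ?thesis
        using carrel_empty_row[OF i] R_chain_last[OF B] sorted_list_of_set_atLeastAtMost_nth[OF i] i
        unfolding row_end_def rank_tuple_def by simp
    next
      case False
      then have "in_shape n lam (lam i) i" unfolding in_shape_def using i by simp
      then show ?thesis
        using carrel_row_end[OF i] i False unfolding row_end_def rank_tuple_def key_of_chain_eq by simp
    qed
  next
    case False
    then show ?thesis unfolding row_end_def rank_tuple_def by (simp only: if_not_P if_False)
  qed
qed

lemma chain_312_free_nth_succ:
  assumes B: "R_chain R n B" and free: "chain_312_free B" and h: "1 \<le> h'" "h' \<le> h" "h \<le> r + 1"
    and k: "k < card (B h')" "Suc k < card (B h)"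
    and less: "sorted_list_of_set (B h) ! k < sorted_list_of_set (B h') ! k"
  shows "sorted_list_of_set (B h) ! Suc k \<le> sorted_list_of_set (B h) ! k + 1"
proof (rule ccontr)
  let ?x = "sorted_list_of_set (B h) ! k" and ?w = "sorted_list_of_set (B h') ! k"
  have fin: "finite (B h)" "finite (B h')" and sub: "B h' \<subseteq> B h"
    using R_chain_finite[OF B] R_chain_mono[OF B h(2,3)] h by auto
  assume "\<not> ?thesis"
  then have vC: "?x + 1 \<notin> B h" using sorted_list_of_set_nth_gap[OF fin(1) k(2)] by simp
  have wA: "?w \<in> B h'" using sorted_list_of_set_nth_mem[OF fin(2) k(1)] .
  then have "?w \<noteq> ?x + 1" using vC sub by auto
  then have w: "?x + 1 < ?w" using less by linarith
  have "card {y\<in>B h'. y \<le> ?x} \<le> k" by (rule card_atMost_below_sorted_list_of_set_nth[OF fin(2) k(1) less])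
  also have "\<dots> < card {y\<in>B h. y \<le> ?x}" using card_atMost_sorted_list_of_set_nth[OF fin(1)] k by simp
  finally obtain u where u: "u \<in> B h - B h'" "u \<le> ?x" using obtain_new_element_below fin(2) by blast
  from u(1) have "u \<in> B h" "u \<notin> B h'" by auto
  then obtain g where g: "h' \<le> g" "g < h" "u \<in> B (Suc g)" "u \<notin> B g"
    by (rule obtain_entry_step[OF h(2)])
  have "1 \<le> g" "g \<le> r" using g h by auto
  then have "step_312_free (B g) (B (Suc g))" by (rule chain_312_free_step[OF B free])
  moreover have "?w \<in> B g" using R_chain_mono[OF B g(1)] wA g h by auto
  ultimately have "?x + 1 \<in> B (Suc g)" using g(3,4) u(2) w unfolding step_312_free_def by auto
  then show False using R_chain_mono[OF B, of "Suc g" h] vC g h by auto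
qed

lemma key_of_chain_tight:
  assumes B: "R_chain R n B" and free: "chain_312_free B"
    and sh: "in_shape n lam (Suc j) i" "in_shape n lam j (Suc i)"
  defines "Y \<equiv> key_of_chain n lam B"
  shows "Y (Suc j) i \<le> Y j i \<or> Y j (Suc i) \<le> Y j i + 1"
proof -
  have j: "1 \<le> j" "Suc j \<le> lam 1" and i: "1 \<le> i" "i \<le> \<zeta> (Suc j)" "i < \<zeta> j"
    using sh in_shape_column in_shape_iff by auto
  let ?C = "sorted_list_of_set (B (col_level j))" and ?A = "sorted_list_of_set (B (col_level (Suc j)))"
  have Y: "Y (Suc j) i = ?A ! (i - 1)" "Y j i = ?C ! (i - 1)" "Y j (Suc i) = ?C ! Suc (i - 1)"
    using sh in_shape_iff i unfolding Y_def key_of_chain_eq by auto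
  have levels: "1 \<le> col_level (Suc j)" "col_level (Suc j) \<le> col_level j" "col_level j \<le> r + 1"
    using col_level_antimono[of j "Suc j"] col_level[of j] col_level[of "Suc j"] j by auto
  have "i - 1 < card (B (col_level (Suc j)))" "Suc (i - 1) < card (B (col_level j))"
    using R_chain_card[OF B] col_level[of j] col_level[of "Suc j"] j i by auto
  then have "?C ! (i - 1) < ?A ! (i - 1) \<Longrightarrow> ?C ! Suc (i - 1) \<le> ?C ! (i - 1) + 1"
    by (rule chain_312_free_nth_succ[OF B free levels])
  then show ?thesis unfolding Y by linarith
qed

lemma tableau_le_key_of_chain_step:
  assumes B: "R_chain R n B" and free: "chain_312_free B" and T: "tableau n lam T"
    and sh: "in_shape n lam j i" "in_shape n lam (Suc j) i"
    and right: "T (Suc j) i \<le> key_of_chain n lam B (Suc j) i"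
    and below: "in_shape n lam j (Suc i) \<Longrightarrow> T j (Suc i) \<le> key_of_chain n lam B j (Suc i)"
  shows "T j i \<le> key_of_chain n lam B j i"
proof -
  let ?Y = "key_of_chain n lam B"
  have TT: "T j i \<le> T (Suc j) i" using T sh unfolding tableau_def by blast
  show ?thesis
  proof (cases "in_shape n lam j (Suc i)")
    case True
    have "T j i < T j (Suc i)" using T sh(1) True unfolding tableau_def by blast
    then show ?thesis using key_of_chain_tight[OF B free sh(2) True] TT right below[OF True] by linarith
  next
    case False
    have j: "1 \<le> j" "Suc j \<le> lam 1" using in_shape_column sh by auto
    have "\<zeta> (Suc j) = \<zeta> j"
      using False sh in_shape_iff zeta_antimono[of j "Suc j"] by (simp add: not_less_eq_eq)
    then have "col_level (Suc j) = col_level j"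
      using col_level_eqI[of "Suc j" "col_level j"] col_level[of j] j by simp
    then have "?Y (Suc j) i = ?Y j i" using sh unfolding key_of_chain_eq by simp
    then show ?thesis using TT right by simp
  qed
qed

text \<open>The induction measure decreases when moving right along a row or down a column.\<close>

lemma tableau_le_key_of_chain:
  assumes B: "R_chain R n B" and free: "chain_312_free B"
    and T: "tableau n lam T" "row_end n lam T = rank_tuple B"
  shows "T \<le> key_of_chain n lam B"
proof -
  let ?Y = "key_of_chain n lam B"
  have row_ends: "row_end n lam T = row_end n lam ?Y" using T(2) row_end_key_of_chain[OF B] by simp
  have "T j i \<le> ?Y j i" if "in_shape n lam j i" for j i
    using that
  proof (induction "(lam 1 - j) * Suc n + (n - i)" arbitrary: j i rule: less_induct)
    case less
    have ji: "1 \<le> j" "1 \<le> i" "i \<le> n" "j \<le> lam i" using less.prems unfolding in_shape_def by auto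
    show ?case
    proof (cases "j = lam i")
      case True
      then show ?thesis using fun_cong[OF row_ends, of i] ji unfolding row_end_def by simp
    next
      case False
      then have sh1: "in_shape n lam (Suc j) i" using less.prems unfolding in_shape_def by auto
      then have "lam 1 - j = Suc (lam 1 - Suc j)" using in_shape_column by fastforce
      then have "T (Suc j) i \<le> ?Y (Suc j) i" using less.hyps[OF _ sh1] by simp
      moreover have "T j (Suc i) \<le> ?Y j (Suc i)" if sh2: "in_shape n lam j (Suc i)"
      proof -
        have "i < n" using sh2 unfolding in_shape_def by simp
        then show ?thesis using less.hyps[OF _ sh2] by simp
      qed
      ultimately show ?thesis by (rule tableau_le_key_of_chain_step[OF B free T(1) less.prems sh1])
    qed
  qed
  moreover have "T j i = ?Y j i" if "\<not> in_shape n lam j i" for j i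
  proof -
    have "T j i = 0" using T(1) that unfolding tableau_def by blast
    then show ?thesis using that unfolding key_of_chain_eq by simp
  qed
  ultimately have "T j i \<le> ?Y j i" for j i by (cases "in_shape n lam j i") auto
  then show ?thesis by (simp add: le_fun_def)
qed

lemma M_max_rank_tuple:
  assumes B: "R_chain R n B" and free: "chain_312_free B"
  shows "M_max n lam (rank_tuple B) = key_of_chain n lam B"
  unfolding M_max_def
proof (rule Greatest_equality)
  show "tableau n lam (key_of_chain n lam B) \<and> row_end n lam (key_of_chain n lam B) = rank_tuple B"
    using key_of_chain_is_key[OF B] row_end_key_of_chain[OF B] unfolding is_key_def by simp
qed (use tableau_le_key_of_chain[OF B free] in blast)

section \<open>Gapless tuples\<close>

lemma rank_tuple_mem:
  assumes B: "R_chain R n B" and i: "1 \<le> i" "i \<le> n"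
  shows "rank_tuple B i \<in> B (carrel i)" "i \<le> rank_tuple B i"
proof -
  note H = carrel[OF i]
  have fin: "finite (B (carrel i))" and sub: "B (carrel i) \<subseteq> {1..n}" and "i - 1 < card (B (carrel i))"
    using R_chain_finite[OF B] R_chain_card[OF B] R_chain_subset[OF B] H i by auto
  then show "rank_tuple B i \<in> B (carrel i)" "i \<le> rank_tuple B i"
    using sorted_list_of_set_nth_mem[OF fin] sorted_list_of_set_nth_ge_Suc[OF fin sub, of "i - 1"] i
    unfolding rank_tuple_def by auto
qed

lemma rank_tuple_R_increasing:
  assumes B: "R_chain R n B"
  shows "R_tuple n (rank_tuple B)" "upper n (rank_tuple B)" "R_increasing R n (rank_tuple B)"
proof -
  show "R_tuple n (rank_tuple B)" unfolding R_tuple_def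
  proof (intro conjI ballI allI impI)
    fix i assume "i \<in> {1..n}"
    then show "rank_tuple B i \<in> {1..n}"
      using rank_tuple_mem[OF B, of i] R_chain_subset[OF B, of "carrel i"] carrel[of i] by auto
  next
    fix i assume "i \<notin> {1..n}"
    then show "rank_tuple B i = 0" unfolding rank_tuple_def by (simp only: if_not_P if_False)
  qed
  show "upper n (rank_tuple B)" unfolding upper_def using rank_tuple_mem[OF B] by auto
  show "R_increasing R n (rank_tuple B)" unfolding R_increasing_def
  proof (intro ballI allI impI)
    fix h i j assume h: "h \<in> {1..r + 1}" and ij: "qR (h - 1) < i \<and> i < j \<and> j \<le> qR h"
    then have "i - 1 < j - 1" "j - 1 < card (B h)" using R_chain_card[OF B] by auto
    then show "rank_tuple B i < rank_tuple B j"
      using rank_tuple_carrel[of h i B] rank_tuple_carrel[of h j B] h ij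
        sorted_list_of_set_nth_less[OF R_chain_finite[OF B]] by auto
  qed
qed

text \<open>At a descent between the carrels \<open>h\<close> and \<open>h + 1\<close>, the value \<open>y\<close> just after the descent
  exceeds only \<open>qR h\<close> elements of \<open>B (h + 1)\<close>, but at most \<open>qR h - 1\<close> elements of \<open>B h\<close>; so some
  new element lies below \<open>y\<close>, and \<open>312\<close>-freeness fills the interval up to \<open>Max (B h)\<close>.\<close>

lemma rank_tuple_descent_interval:
  assumes B: "R_chain R n B" and free: "chain_312_free B" and h: "1 \<le> h" "h \<le> r"
    and descent: "rank_tuple B (qR h + 1) < Max (B h)"
  shows "{rank_tuple B (qR h + 1)..Max (B h)} \<subseteq> B (Suc h)"
proof -
  let ?y = "rank_tuple B (qR h + 1)" and ?m = "Max (B h)"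
  have qh: "1 \<le> qR h" "qR h < qR (Suc h)" using qR_pos qR_strict_mono h by auto
  have finh: "finite (B h)" and cardh: "card (B h) = qR h" and fin1: "finite (B (Suc h))"
    and card1: "card (B (Suc h)) = qR (Suc h)" and sub: "B h \<subseteq> B (Suc h)"
    using R_chain_finite[OF B] R_chain_card[OF B] R_chain_mono[OF B, of h "Suc h"] h by auto
  have "B h \<noteq> {}" using cardh qh by auto
  then have mB: "?m \<in> B h" using finh by simp
  have y: "?y = sorted_list_of_set (B (Suc h)) ! qR h"
    using rank_tuple_carrel[of "Suc h" "qR h + 1" B] h qh by simp
  then have yB: "?y \<in> B (Suc h)" using sorted_list_of_set_nth_mem[OF fin1] card1 qh by simp
  have "{z\<in>B h. z \<le> ?y} \<subseteq> B h - {?m}" using descent by auto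
  then have "card {z\<in>B h. z \<le> ?y} \<le> card (B h - {?m})" using finh by (intro card_mono) auto
  also have "\<dots> < card {z\<in>B (Suc h). z \<le> ?y}"
    using y card_atMost_sorted_list_of_set_nth[OF fin1, of "qR h"] finh cardh mB card1 qh by simp
  finally obtain u where u: "u \<in> B (Suc h) - B h" "u \<le> ?y" using obtain_new_element_below finh by blast
  show ?thesis
  proof
    fix v assume v: "v \<in> {?y..?m}"
    consider "v = ?y" | "v = ?m" | "?y < v" "v < ?m" using v by (cases "v = ?y"; cases "v = ?m") auto
    then show "v \<in> B (Suc h)"
    proof cases
      case 3
      then show ?thesis
        using chain_312_free_step[OF B free h] u mB unfolding step_312_free_def by fastforce
    qed (use yB mB sub in auto)
  qed
qed

lemma rank_tuple_descent:
  assumes B: "R_chain R n B" and free: "chain_312_free B" and h: "1 \<le> h" "h \<le> r"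
    and descent: "rank_tuple B (qR h + 1) < rank_tuple B (qR h)"
  defines "s \<equiv> rank_tuple B (qR h) - rank_tuple B (qR h + 1) + 1"
  shows "s \<le> qR (h + 1) - qR h"
    and "\<And>t. t \<in> {1..s} \<Longrightarrow> rank_tuple B (qR h + t) = rank_tuple B (qR h) - s + t"
proof -
  let ?y = "rank_tuple B (qR h + 1)" and ?m = "rank_tuple B (qR h)"
  let ?S = "sorted_list_of_set (B (Suc h))"
  have qh: "1 \<le> qR h" "qR h < qR (Suc h)" using qR_pos qR_strict_mono h by auto
  have finh: "finite (B h)" and cardh: "card (B h) = qR h" and fin1: "finite (B (Suc h))"
    and card1: "card (B (Suc h)) = qR (Suc h)"
    using R_chain_finite[OF B] R_chain_card[OF B] h by auto
  have "B h \<noteq> {}" using cardh qh by auto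
  then have "?m = Max (B h)"
    using rank_tuple_carrel[of h "qR h" B] qR_strict_mono[of "h - 1" h] sorted_list_of_set_nth_last[OF finh]
      cardh h by simp
  then have K: "{?S ! qR h..?m} \<subseteq> B (Suc h)"
    using rank_tuple_descent_interval[OF B free h] descent rank_tuple_carrel[of "Suc h" "qR h + 1" B] h qh
    by simp
  have y: "?y = ?S ! qR h" using rank_tuple_carrel[of "Suc h" "qR h + 1" B] h qh by simp
  note block = sorted_list_of_set_nth_interval[OF fin1 _ K, unfolded card1 y[symmetric]]
  show s_le: "s \<le> qR (h + 1) - qR h" using block(1)[of "?m - ?y"] qh unfolding s_def by simp
  fix t assume t: "t \<in> {1..s}"
  have "rank_tuple B (qR h + t) = ?S ! (qR h + (t - 1))"
    using rank_tuple_carrel[of "Suc h" "qR h + t" B] h t s_le qh by (simp add: le_diff_conv2)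
  also have "\<dots> = ?y + (t - 1)"
  proof -
    have "t - 1 \<le> ?m - ?y" using t unfolding s_def by auto
    then show ?thesis using block(2) qh by simp
  qed
  also have "\<dots> = ?m - s + t"
  proof -
    have "qR h + 1 \<le> n" using qh qR_le_n[of "Suc h"] h by simp
    then have "1 \<le> ?y" using rank_tuple_mem(2)[OF B, of "qR h + 1"] by simp
    then show ?thesis using t descent unfolding s_def by auto
  qed
  finally show "rank_tuple B (qR h + t) = ?m - s + t" .
qed

lemma rank_tuple_gapless:
  assumes B: "R_chain R n B" and free: "chain_312_free B"
  shows "gapless_tuple R n (rank_tuple B)"
  unfolding gapless_tuple_def Let_def
  using rank_tuple_R_increasing[OF B] rank_tuple_descent[OF B free] by simp

context
  fixes \<gamma> :: "nat \<Rightarrow> nat"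
  assumes gt: "gapless_tuple R n \<gamma>"
begin

lemma gamma_R_tuple: "R_tuple n \<gamma>" and gamma_upper: "upper n \<gamma>" and gamma_R_increasing: "R_increasing R n \<gamma>"
  using gt unfolding gapless_tuple_def by auto

lemma gamma_range: "1 \<le> i \<Longrightarrow> i \<le> n \<Longrightarrow> i \<le> \<gamma> i \<and> \<gamma> i \<le> n"
  using gamma_R_tuple gamma_upper unfolding R_tuple_def upper_def by auto

lemma gamma_ge: "1 \<le> k \<Longrightarrow> k \<le> n \<Longrightarrow> k \<le> \<gamma> k"
  using gamma_range by simp

lemma gamma_outside: "i \<notin> {1..n} \<Longrightarrow> \<gamma> i = 0"
  using gamma_R_tuple unfolding R_tuple_def by auto

lemma gamma_descent:
  assumes "1 \<le> h" "h \<le> r" "\<gamma> (qR h) > \<gamma> (qR h + 1)"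
  shows "\<gamma> (qR h) - \<gamma> (qR h + 1) + 1 \<le> qR (h + 1) - qR h"
    "\<And>t. 1 \<le> t \<Longrightarrow> t \<le> \<gamma> (qR h) - \<gamma> (qR h + 1) + 1 \<Longrightarrow>
       \<gamma> (qR h + t) = \<gamma> (qR h) - (\<gamma> (qR h) - \<gamma> (qR h + 1) + 1) + t"
  using gt assms unfolding gapless_tuple_def Let_def by auto

lemma gamma_carrel_increase:
  assumes h: "1 \<le> h" "h \<le> r + 1" and ij: "qR (h - 1) < i" "i \<le> j" "j \<le> qR h"
  shows "\<gamma> i + (j - i) \<le> \<gamma> j"
proof -
  have step: "\<gamma> k < \<gamma> (Suc k)" if "qR (h - 1) < k" "Suc k \<le> qR h" for k
    using gamma_R_increasing h that unfolding R_increasing_def by auto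
  have "\<gamma> i + d \<le> \<gamma> (i + d)" if "i + d \<le> qR h" for d
    using that
  proof (induction d)
    case 0 then show ?case by simp
  next
    case (Suc d)
    then have "\<gamma> i + d \<le> \<gamma> (i + d)" by simp
    moreover have "\<gamma> (i + d) < \<gamma> (Suc (i + d))" using step[of "i + d"] ij Suc.prems by simp
    ultimately show ?case by simp
  qed
  from this[of "j - i"] show ?thesis using ij by simp
qed

text \<open>\<open>entry h i\<close> is the \<open>i\<close>-th term of the largest strictly increasing sequence bounded above by
  \<open>\<gamma>\<close> on \<open>{1..qR h}\<close>; on the \<open>h\<close>-th carrel it agrees with \<open>\<gamma>\<close>.\<close>

definition entry :: "nat \<Rightarrow> nat \<Rightarrow> nat" where
  "entry h i = Min ((\<lambda>k. \<gamma> k + i - k) ` {i..qR h})"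

lemma entry_le:
  assumes "i \<le> k" "k \<le> qR h"
  shows "entry h i \<le> \<gamma> k + i - k"
  unfolding entry_def using assms by (intro Min_le) auto

lemma entry_witness:
  assumes "i \<le> qR h"
  obtains k where "i \<le> k" "k \<le> qR h" "entry h i = \<gamma> k + i - k"
proof -
  have "entry h i \<in> (\<lambda>k. \<gamma> k + i - k) ` {i..qR h}" unfolding entry_def using assms by (intro Min_in) auto
  then show ?thesis using that by auto
qed

lemma entry_greatest:
  assumes "i \<le> qR h" "\<And>k. i \<le> k \<Longrightarrow> k \<le> qR h \<Longrightarrow> x \<le> \<gamma> k + i - k"
  shows "x \<le> entry h i"
  using entry_witness[OF assms(1)] assms(2) by metis

lemma entry_strict_mono:
  assumes h: "h \<le> r + 1" and i: "1 \<le> i" "i < i'" "i' \<le> qR h"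
  shows "entry h i + (i' - i) \<le> entry h i'"
proof -
  obtain k where k: "i' \<le> k" "k \<le> qR h" "entry h i' = \<gamma> k + i' - k" using entry_witness[OF i(3)] by blast
  have "entry h i \<le> \<gamma> k + i - k" using entry_le[of i k h] k i by simp
  moreover have "k \<le> \<gamma> k" using gamma_ge[of k] k i qR_le_n[OF h] by simp
  ultimately show ?thesis using k i by simp
qed

lemma entry_bounds:
  assumes h: "h \<le> r + 1" and i: "1 \<le> i" "i \<le> qR h"
  shows "i \<le> entry h i" "entry h i \<le> \<gamma> (qR h) + i - qR h" "entry h i \<le> n"
proof -
  show "i \<le> entry h i"
    using entry_greatest[OF i(2)] gamma_ge qR_le_n[OF h] i by (metis le_add2 le_add_diff order.trans)
  show le: "entry h i \<le> \<gamma> (qR h) + i - qR h" using entry_le[of i "qR h" h] i by simp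
  have "\<gamma> (qR h) \<le> n" using gamma_range[of "qR h"] i qR_le_n[OF h] by simp
  then show "entry h i \<le> n" using le i by simp
qed

lemma entry_on_carrel:
  assumes h: "1 \<le> h" "h \<le> r + 1" and i: "qR (h - 1) < i" "i \<le> qR h"
  shows "entry h i = \<gamma> i"
proof (rule antisym)
  show "entry h i \<le> \<gamma> i" using entry_le[of i i h] i by simp
  show "\<gamma> i \<le> entry h i"
  proof (rule entry_greatest[OF i(2)])
    fix k assume "i \<le> k" "k \<le> qR h"
    then show "\<gamma> i \<le> \<gamma> k + i - k" using gamma_carrel_increase[OF h i(1), of k] by simp
  qed
qed

definition tuple_chain :: "nat \<Rightarrow> nat set" where
  "tuple_chain h = (if h \<le> r + 1 then entry h ` {1..qR h} else {})"

lemma tuple_chain_sorted: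
  assumes h: "h \<le> r + 1"
  shows "sorted_list_of_set (tuple_chain h) = map (entry h) [1..<Suc (qR h)]"
proof -
  have "sorted_list_of_set (entry h ` {1..qR h}) = map (entry h) [1..<Suc (qR h)]"
    by (rule sorted_list_of_set_image_strict_mono) (use entry_strict_mono[OF h] in fastforce)
  then show ?thesis unfolding tuple_chain_def using h by simp
qed

lemma tuple_chain_card: "h \<le> r + 1 \<Longrightarrow> card (tuple_chain h) = qR h"
  using tuple_chain_sorted by (metis List.finite_set length_map length_upt diff_Suc_1 length_sorted_list_of_set tuple_chain_def
      finite_atLeastAtMost finite_imageI)

lemma tuple_chain_nth: "h \<le> r + 1 \<Longrightarrow> 1 \<le> i \<Longrightarrow> i \<le> qR h \<Longrightarrow> sorted_list_of_set (tuple_chain h) ! (i - 1) = entry h i"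
  using tuple_chain_sorted by (simp del: upt_Suc)

lemma tuple_chain_memI: "h \<le> r + 1 \<Longrightarrow> 1 \<le> i \<Longrightarrow> i \<le> qR h \<Longrightarrow> entry h i \<in> tuple_chain h"
  unfolding tuple_chain_def by simp

context
  fixes h assumes h: "1 \<le> h" "h \<le> r"
begin

abbreviation "y \<equiv> \<gamma> (qR h + 1)"
abbreviation "m \<equiv> \<gamma> (qR h)"
abbreviation "c \<equiv> \<gamma> (qR h + 1) - (qR h + 1)"

lemma qR_around: "1 \<le> qR h" "qR h < qR (h + 1)" "qR (h + 1) \<le> n"
  using qR_pos qR_strict_mono qR_le_n h by auto

lemma descent_value_ge: "qR h + 1 \<le> y" using gamma_range[of "qR h + 1"] qR_around by simp

lemma entry_next_below:
  assumes i: "1 \<le> i" "i \<le> qR h"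
  shows "entry (h + 1) i = min (entry h i) (c + i)"
proof (rule antisym)
  obtain k where k: "i \<le> k" "k \<le> qR h" "entry h i = \<gamma> k + i - k" using entry_witness[OF i(2)] by blast
  have a: "entry (h + 1) i \<le> entry h i" using entry_le[of i k "h + 1"] k qR_around by simp
  have b: "entry (h + 1) i \<le> c + i" using entry_le[of i "qR h + 1" "h + 1"] qR_around i descent_value_ge by simp
  show "entry (h + 1) i \<le> min (entry h i) (c + i)" using a b by simp
next
  show "min (entry h i) (c + i) \<le> entry (h + 1) i"
  proof (rule entry_greatest)
    show "i \<le> qR (h + 1)" using i qR_around by simp
    fix k assume k: "i \<le> k" "k \<le> qR (h + 1)"
    show "min (entry h i) (c + i) \<le> \<gamma> k + i - k"
    proof (cases "k \<le> qR h")
      case True then show ?thesis using entry_le[of i k h] k by simp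
    next
      case False
      then have "\<gamma> (qR h + 1) + (k - (qR h + 1)) \<le> \<gamma> k"
        using gamma_carrel_increase[of "h + 1" "qR h + 1" k] h k by simp
      then show ?thesis using False descent_value_ge by simp
    qed
  qed
qed

lemma entry_next_carrel:
  assumes i: "qR h < i" "i \<le> qR (h + 1)"
  shows "entry (h + 1) i = \<gamma> i"
  using entry_on_carrel[of "h + 1" i] h i by simp

lemma descent_value_in: "y \<in> tuple_chain (h + 1)"
proof -
  have "entry (h + 1) (qR h + 1) = y" using entry_next_carrel[of "qR h + 1"] qR_around by simp
  moreover have "entry (h + 1) (qR h + 1) \<in> tuple_chain (h + 1)" using tuple_chain_memI[of "h + 1" "qR h + 1"] qR_around h by simp
  ultimately show ?thesis by simp
qed

lemma descent_block_in:
  assumes "m > y"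
  shows "{y..m} \<subseteq> tuple_chain (h + 1)"
proof
  fix z assume z: "z \<in> {y..m}"
  define t where "t = z - y + 1"
  have t: "1 \<le> t" "t \<le> m - y + 1" using z unfolding t_def by auto
  have "\<gamma> (qR h + t) = m - (m - y + 1) + t" using gamma_descent(2)[OF h assms t] .
  then have gz: "\<gamma> (qR h + t) = z" using z assms descent_value_ge unfolding t_def by auto
  have "qR h + t \<le> qR (h + 1)" using gamma_descent(1)[OF h assms] t by simp
  then have "entry (h + 1) (qR h + t) = z" using entry_next_carrel[of "qR h + t"] t gz by simp
  moreover have "qR h + t \<in> {1..qR (h + 1)}" using \<open>qR h + t \<le> qR (h + 1)\<close> t by simp
  ultimately show "z \<in> tuple_chain (h + 1)" unfolding tuple_chain_def using h by force
qed

lemma shifted_interval_in: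
  assumes i: "1 \<le> i" "i \<le> qR h" and big: "c + i < entry h i"
  shows "{c + i..max y m} \<subseteq> tuple_chain (h + 1)"
proof
  fix z assume z: "z \<in> {c + i..max y m}"
  show "z \<in> tuple_chain (h + 1)"
  proof (cases "z \<le> c + qR h")
    case True
    define i' where "i' = z - c"
    have i': "i \<le> i'" "i' \<le> qR h" "z = c + i'" using z True unfolding i'_def by auto
    have "entry h i + (i' - i) \<le> entry h i'"
    proof (cases "i = i'")
      case False then show ?thesis using entry_strict_mono[of h i i'] i i' h by simp
    qed simp
    then have "c + i' < entry h i'" using big i' by simp
    then have "entry (h + 1) i' = z" using entry_next_below[of i'] i i' by simp
    moreover have "i' \<in> {1..qR (h + 1)}" using i i' qR_around by simp
    ultimately show ?thesis unfolding tuple_chain_def using h by force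
  next
    case False
    then have zy: "y \<le> z" using descent_value_ge by simp
    show ?thesis
    proof (cases "z = y")
      case True then show ?thesis using descent_value_in by simp
    next
      case False
      then have "y < z" "z \<le> m" using zy z by auto
      then show ?thesis using descent_block_in by auto
    qed
  qed
qed

lemma tuple_chain_mono: "tuple_chain h \<subseteq> tuple_chain (h + 1)"
proof
  fix x assume "x \<in> tuple_chain h"
  then obtain i where i: "1 \<le> i" "i \<le> qR h" "x = entry h i" unfolding tuple_chain_def using h by auto
  show "x \<in> tuple_chain (h + 1)"
  proof (cases "entry h i \<le> c + i")
    case True
    then have "entry (h + 1) i = x" using entry_next_below[OF i(1,2)] i by simp
    moreover have "i \<in> {1..qR (h + 1)}" using i qR_around by simp
    ultimately show ?thesis unfolding tuple_chain_def using h by force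
  next
    case False
    have "x \<le> m" using entry_bounds(2)[of h i] i h by simp
    then have "x \<in> {c + i..max y m}" using False i by simp
    then show ?thesis using shifted_interval_in[OF i(1,2)] False by auto
  qed
qed

lemma tuple_chain_le_max: assumes "x \<in> tuple_chain h" shows "x \<le> m"
proof -
  obtain i where i: "1 \<le> i" "i \<le> qR h" "x = entry h i" using assms h unfolding tuple_chain_def by auto
  have "entry h i \<le> m + i - qR h" using entry_bounds(2)[of h i] i h by simp
  then show ?thesis using i by simp
qed

lemma tuple_chain_step_312_free: "step_312_free (tuple_chain h) (tuple_chain (Suc h))"
  unfolding step_312_free_def
proof (intro ballI allI impI)
  fix u w v assume u: "u \<in> tuple_chain (Suc h) - tuple_chain h" and w: "w \<in> tuple_chain h"
    and uvw: "u < v" "v < w"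
  obtain i where i: "1 \<le> i" "i \<le> qR (h + 1)" "u = entry (h + 1) i"
    using u h unfolding tuple_chain_def by (auto split: if_splits)
  have wm: "w \<le> m" using tuple_chain_le_max w by simp
  show "v \<in> tuple_chain (Suc h)"
  proof (cases "i \<le> qR h")
    case False
    then have "y + (i - (qR h + 1)) \<le> \<gamma> i"
      using gamma_carrel_increase[of "h + 1" "qR h + 1" i] h i by simp
    then have "y \<le> u" using entry_next_carrel[of i] i False by simp
    then have "y < v" "v < m" using uvw wm by auto
    then show ?thesis using descent_block_in by auto
  next
    case True
    show ?thesis
    proof (cases "entry h i \<le> c + i")
      case True': True
      then have "u \<in> tuple_chain h"
        using entry_next_below[of i] i True tuple_chain_memI[of h i] h by simp
      then show ?thesis using u by simp
    next
      case False
      then have "u = c + i" using entry_next_below[of i] i True by simp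
      then have "v \<in> {c + i..max y m}" using uvw wm by auto
      then show ?thesis using shifted_interval_in[of i] i True False by auto
    qed
  qed
qed

end

lemma R_chain_tuple_chain: "R_chain R n tuple_chain"
proof (rule R_chainI)
  show "tuple_chain h \<subseteq> tuple_chain (Suc h)" if "h \<le> r" for h
    using tuple_chain_mono[of h] that by (cases "h = 0") (simp_all add: tuple_chain_def qR_0)
  have "\<gamma> n = n" using gamma_range[of n] n_pos by simp
  then have "entry (r + 1) i = i" if "1 \<le> i" "i \<le> n" for i
    using entry_bounds(1,2)[of "r + 1" i] that qR_last by simp
  then show "tuple_chain (r + 1) = {1..n}" unfolding tuple_chain_def using qR_last by simp
qed (use tuple_chain_card in \<open>simp_all add: tuple_chain_def qR_0\<close>)

lemma tuple_chain_312_free: "chain_312_free tuple_chain"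
  unfolding chain_312_free_def
proof
  fix h assume "h \<in> {1..r - 1}"
  then have "1 \<le> h" "h \<le> r" by auto
  then show "step_312_free (tuple_chain h) (tuple_chain (Suc h))" by (rule tuple_chain_step_312_free)
qed

lemma rank_tuple_tuple_chain: "rank_tuple tuple_chain = \<gamma>"
proof
  fix i show "rank_tuple tuple_chain i = \<gamma> i"
  proof (cases "i \<in> {1..n}")
    case True
    then have i: "1 \<le> i" "i \<le> n" by auto
    note H = carrel[OF i]
    have "rank_tuple tuple_chain i = entry (carrel i) i" unfolding rank_tuple_def using tuple_chain_nth[of "carrel i" i] H True by simp
    also have "\<dots> = \<gamma> i" using entry_on_carrel[of "carrel i" i] H by simp
    finally show ?thesis .
  next
    case False
    show ?thesis unfolding rank_tuple_def if_not_P[OF False] using gamma_outside[OF False] by simp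
  qed
qed

end

lemma gapless_tuple_obtain_chain:
  assumes "gapless_tuple R n \<gamma>"
  obtains B where "R_chain R n B" "chain_312_free B" "rank_tuple B = \<gamma>"
  using R_chain_tuple_chain[OF assms] tuple_chain_312_free[OF assms] rank_tuple_tuple_chain[OF assms] by blast

lemma R312_avoiding_iff_gapless_key:
  assumes "R_perm R n \<pi>"
  shows "\<not> R312_containing R n \<pi> \<longleftrightarrow> gapless_key n lam (key_of_perm n lam \<pi>)"
  using key_of_perm_eq[OF assms] R312_containing_iff[OF assms]
    gapless_key_iff_chain_312_free[OF R_chain_chain_of[OF assms]] by simp

lemma gapless_key_obtain_chain:
  assumes "gapless_key n lam Y"
  obtains B where "R_chain R n B" "chain_312_free B" "key_of_chain n lam B = Y"
proof
  have key: "is_key n lam Y" using assms unfolding gapless_key_def by simp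
  show B: "R_chain R n (chain_of_key Y)" by (rule R_chain_chain_of_key[OF key])
  show Y: "key_of_chain n lam (chain_of_key Y) = Y" by (rule key_of_chain_chain_of_key[OF key])
  show "chain_312_free (chain_of_key Y)" using gapless_key_iff_chain_312_free[OF B] assms Y by simp
qed

lemma keys_of_R312_avoiding_perms:
  "{key_of_perm n lam \<pi> | \<pi>. R_perm R n \<pi> \<and> \<not> R312_containing R n \<pi>} = {Y. gapless_key n lam Y}"
proof (intro set_eqI iffI)
  fix Y assume "Y \<in> {key_of_perm n lam \<pi> | \<pi>. R_perm R n \<pi> \<and> \<not> R312_containing R n \<pi>}"
  then show "Y \<in> {Y. gapless_key n lam Y}" using R312_avoiding_iff_gapless_key by blast
next
  fix Y assume "Y \<in> {Y. gapless_key n lam Y}"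
  then obtain B where B: "R_chain R n B" "chain_312_free B" "key_of_chain n lam B = Y"
    using gapless_key_obtain_chain by blast
  then obtain \<pi> where \<pi>: "R_perm R n \<pi>" "chain_of R n \<pi> = B" using R_chain_obtain_perm by blast
  then have "key_of_perm n lam \<pi> = Y" "\<not> R312_containing R n \<pi>"
    using key_of_perm_eq R312_containing_iff B by simp_all
  then show "Y \<in> {key_of_perm n lam \<pi> | \<pi>. R_perm R n \<pi> \<and> \<not> R312_containing R n \<pi>}"
    using \<pi>(1) by blast
qed

lemma M_max_Psi:
  assumes "R_perm R n \<pi>" "\<not> R312_containing R n \<pi>"
  shows "M_max n lam (Psi R n \<pi>) = key_of_perm n lam \<pi>"
  using Psi_eq_rank_tuple[OF assms(1)] key_of_perm_eq[OF assms(1)] R312_containing_iff[OF assms(1)]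
    M_max_rank_tuple[OF R_chain_chain_of[OF assms(1)]] assms(2) by simp

lemma bij_betw_key_of_chain:
  "bij_betw (key_of_chain n lam) {B. R_chain R n B \<and> rightmost_clump_deleting R n B}
     {Y. gapless_key n lam Y}"
proof (rule bij_betw_imageI)
  show "inj_on (key_of_chain n lam) {B. R_chain R n B \<and> rightmost_clump_deleting R n B}"
    using key_of_chain_inj by (intro inj_onI) blast
  show "key_of_chain n lam ` {B. R_chain R n B \<and> rightmost_clump_deleting R n B} = {Y. gapless_key n lam Y}"
  proof (intro set_eqI iffI)
    fix Y assume "Y \<in> {Y. gapless_key n lam Y}"
    then obtain B where "R_chain R n B" "chain_312_free B" "key_of_chain n lam B = Y"
      using gapless_key_obtain_chain by blast
    then show "Y \<in> key_of_chain n lam ` {B. R_chain R n B \<and> rightmost_clump_deleting R n B}"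
      using rightmost_clump_deleting_iff_chain_312_free by blast
  qed (use rightmost_clump_deleting_iff_chain_312_free gapless_key_iff_chain_312_free in auto)
qed

lemma gapless_keys_eq_M_max_image:
  "{Y. gapless_key n lam Y} = {M_max n lam \<gamma> | \<gamma>. gapless_tuple R n \<gamma>}"
proof (intro set_eqI iffI)
  fix Y assume "Y \<in> {Y. gapless_key n lam Y}"
  then obtain B where B: "R_chain R n B" "chain_312_free B" "key_of_chain n lam B = Y"
    using gapless_key_obtain_chain by blast
  then have "gapless_tuple R n (rank_tuple B)" "M_max n lam (rank_tuple B) = Y"
    using rank_tuple_gapless M_max_rank_tuple by simp_all
  then show "Y \<in> {M_max n lam \<gamma> | \<gamma>. gapless_tuple R n \<gamma>}" by blast
next
  fix Y assume "Y \<in> {M_max n lam \<gamma> | \<gamma>. gapless_tuple R n \<gamma>}"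
  then obtain \<gamma> where "gapless_tuple R n \<gamma>" "Y = M_max n lam \<gamma>" by blast
  moreover obtain B where "R_chain R n B" "chain_312_free B" "rank_tuple B = \<gamma>"
    using gapless_tuple_obtain_chain[OF calculation(1)] .
  ultimately have "Y = key_of_chain n lam B" "gapless_key n lam (key_of_chain n lam B)"
    using M_max_rank_tuple gapless_key_iff_chain_312_free by auto
  then show "Y \<in> {Y. gapless_key n lam Y}" by simp
qed

lemma row_end_M_max:
  assumes "gapless_tuple R n \<gamma>"
  shows "row_end n lam (M_max n lam \<gamma>) = \<gamma>"
proof -
  obtain B where "R_chain R n B" "chain_312_free B" "rank_tuple B = \<gamma>"
    using gapless_tuple_obtain_chain[OF assms] .
  then show ?thesis using M_max_rank_tuple row_end_key_of_chain by force
qed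

lemma bij_betw_M_max:
  "bij_betw (M_max n lam) {\<gamma>. gapless_tuple R n \<gamma>} {M_max n lam \<gamma> | \<gamma>. gapless_tuple R n \<gamma>}"
proof (rule bij_betw_imageI)
  show "inj_on (M_max n lam) {\<gamma>. gapless_tuple R n \<gamma>}"
    by (rule inj_on_inverseI[of _ "row_end n lam"]) (simp add: row_end_M_max)
qed blast

end

theorem theorem5p2:
  fixes n :: nat and lam :: "nat \<Rightarrow> nat" and R :: "nat set"
  assumes "1 \<le> n" and "is_partition n lam"
  defines "R \<equiv> R_of n lam"
  shows "{key_of_perm n lam \<pi> | \<pi>. R_perm R n \<pi> \<and> \<not> R312_containing R n \<pi>} = {Y. gapless_key n lam Y}
       \<and> {Y. gapless_key n lam Y} = {M_max n lam \<gamma> | \<gamma>. gapless_tuple R n \<gamma>}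
       \<and> (\<forall>\<pi>. R_perm R n \<pi> \<longrightarrow> (\<not> R312_containing R n \<pi> \<longleftrightarrow> gapless_key n lam (key_of_perm n lam \<pi>)))
       \<and> (\<forall>\<pi>. R_perm R n \<pi> \<and> \<not> R312_containing R n \<pi> \<longrightarrow> M_max n lam (Psi R n \<pi>) = key_of_perm n lam \<pi>)
       \<and> bij_betw (key_of_chain n lam) {B. R_chain R n B \<and> rightmost_clump_deleting R n B} {Y. gapless_key n lam Y}
       \<and> bij_betw (M_max n lam) {\<gamma>. gapless_tuple R n \<gamma>} {M_max n lam \<gamma> | \<gamma>. gapless_tuple R n \<gamma>}"
proof -
  interpret partition_shape n lam using assms(1,2) by unfold_locales
  show ?thesis
    unfolding R_def
    using keys_of_R312_avoiding_perms gapless_keys_eq_M_max_image R312_avoiding_iff_gapless_key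
      M_max_Psi bij_betw_key_of_chain bij_betw_M_max by blast
qed

end
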